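(* Let $G$ be a connected graph and $U \subseteq V(G)$ an uncountable set of vertices such that every $U$-rooted minor of $G$ with countable branch sets has countable colouring number. Let $(T,\mathcal V)$ be a slim $U$-rooted normal semi-partition tree of $G$ with $U \subseteq V(G(T))$, and let $\kappa = |T|$. Then $T$ can be written as a continuous increasing union $T=\bigcup_{i<\mathrm{cf}(\kappa)} T_i$ of infinite rooted subtrees $T_i$ with $|T_i|<|T|$ such that every $G(T_i)$ has finite adhesion in $G$ towards $U$.
   Context: Minors are given by disjoint connected branch sets; a minor is $U$-rooted if every branch set meets $U$. A graph has countable colouring number if its vertices admit a well-order in which each vertex is preceded by only finitely many of its neighbours. An order tree is a poset with unique minimal element in which every down-closure $\lceil t\rceil$ is well-ordered; $\mathring{\lceil t\rceil}=\lceil t\rceil\setminus\{t\}$; height of $t$ = order type of $\mathring{\lceil t\rceil}$; rooted subtree = down-closed subset. A $T$-graph is a graph on $T$ with comparable endvertices on every edge and with lower neighbours of each $t$ cofinal in $\mathring{\lceil t\rceil}$. $(T,(V_t)_{t\in T})$ with nonempty $V_t\subseteq V(G)$ is a normal semi-partition tree if the $V_t$ are pairwise disjoint, each $G[V_t]$ is connected, contracting each $V_t$ in $G[\bigcup_t V_t]$ gives a $T$-graph, and for every path in $G$ with at least one edge, endvertices in $V_t$ and $V_{t'}$, inner vertices outside $\bigcup V_s$ and no edges inside $G[\bigcup V_s]$, $t$ and $t'$ are comparable. It is slim if $|V_t|\le|\mathrm{height}(t)|+\aleph_0$, and $U$-rooted if every $V_t$ meets $U$. $G(S)=G[\bigcup_{t\in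 S}V_t]$. An induced subgraph $H$ has finite adhesion in $G$ towards $U$ if every component of $G-H$ containing a vertex of $U$ has only finitely many neighbours in $H$. Continuous means $T_\ell=\bigcup_{i<\ell}T_i$ for limit $\ell$. *)

theory Defs
  imports Main "HOL-Library.Countable_Set"
begin

definition graph :: "'v set \<Rightarrow> ('v \<times> 'v) set \<Rightarrow> bool" where
  "graph V E \<longleftrightarrow> E \<subseteq> V \<times> V \<and> sym E \<and> irrefl E"

definition connected_in :: "('v \<times> 'v) set \<Rightarrow> 'v set \<Rightarrow> bool" where
  "connected_in E X \<longleftrightarrow> X \<noteq> {} \<and> (\<forall>u\<in>X. \<forall>v\<in>X. (u, v) \<in> (E \<inter> (X \<times> X))\<^sup>*)"

definition connected_graph :: "'v set \<Rightarrow> ('v \<times> 'v) set \<Rightarrow> bool" where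
  "connected_graph V E \<longleftrightarrow> graph V E \<and> connected_in E V"

definition countable_colouring_number :: "'v set \<Rightarrow> ('v \<times> 'v) set \<Rightarrow> bool" where
  "countable_colouring_number V E \<longleftrightarrow>
     (\<exists>r. well_order_on V r \<and> (\<forall>v\<in>V. finite {u\<in>V. (u, v) \<in> E \<and> (u, v) \<in> r}))"

text \<open>A minor of G=(V,E), represented with its branch sets as its vertices:
  the vertex set is a family of pairwise disjoint connected vertex sets of G and
  every edge of the minor joins two branch sets that are joined by an edge of G.\<close>
definition is_minor :: "'v set \<Rightarrow> ('v \<times> 'v) set \<Rightarrow> 'v set set \<Rightarrow> ('v set \<times> 'v set) set \<Rightarrow> bool" where
  "is_minor V E B EH \<longleftrightarrow>
     B \<subseteq> Pow V \<and> (\<forall>X\<in>B. \<forall>Y\<in>B. X \<noteq> Y \<longrightarrow> X \<inter> Y = {}) \<and>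
     (\<forall>X\<in>B. connected_in E X) \<and> graph B EH \<and>
     (\<forall>(X, Y)\<in>EH. \<exists>x\<in>X. \<exists>y\<in>Y. (x, y) \<in> E)"

definition rooted_minor :: "'v set \<Rightarrow> ('v \<times> 'v) set \<Rightarrow> 'v set \<Rightarrow> 'v set set \<Rightarrow> ('v set \<times> 'v set) set \<Rightarrow> bool" where
  "rooted_minor V E U B EH \<longleftrightarrow> is_minor V E B EH \<and> (\<forall>X\<in>B. X \<inter> U \<noteq> {})"

definition gpath :: "('v \<times> 'v) set \<Rightarrow> 'v list \<Rightarrow> bool" where
  "gpath E p \<longleftrightarrow> p \<noteq> [] \<and> distinct p \<and> (\<forall>i. Suc i < length p \<longrightarrow> (p ! i, p ! Suc i) \<in> E)"

definition component_of :: "('v \<times> 'v) set \<Rightarrow> 'v set \<Rightarrow> 'v set \<Rightarrow> bool" where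
  "component_of E X C \<longleftrightarrow> C \<subseteq> X \<and> connected_in E C \<and>
     (\<forall>D. C \<subseteq> D \<and> D \<subseteq> X \<and> connected_in E D \<longrightarrow> D = C)"

definition finite_adhesion :: "'v set \<Rightarrow> ('v \<times> 'v) set \<Rightarrow> 'v set \<Rightarrow> 'v set \<Rightarrow> bool" where
  "finite_adhesion V E H U \<longleftrightarrow>
     (\<forall>C. component_of E (V - H) C \<and> C \<inter> U \<noteq> {} \<longrightarrow> finite {h\<in>H. \<exists>c\<in>C. (c, h) \<in> E})"

definition down :: "('t \<times> 't) set \<Rightarrow> 't \<Rightarrow> 't set" where
  "down le t = {s. (s, t) \<in> le}"

definition sdown :: "('t \<times> 't) set \<Rightarrow> 't \<Rightarrow> 't set" where
  "sdown le t = {s. (s, t) \<in> le \<and> s \<noteq> t}"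

definition order_tree :: "'t set \<Rightarrow> ('t \<times> 't) set \<Rightarrow> bool" where
  "order_tree T le \<longleftrightarrow> le \<subseteq> T \<times> T \<and> partial_order_on T le \<and>
     (\<exists>!r. r \<in> T \<and> (\<forall>s\<in>T. (s, r) \<in> le \<longrightarrow> s = r)) \<and>
     (\<forall>t\<in>T. well_order_on (down le t) (le \<inter> (down le t \<times> down le t)))"

definition rooted_subtree :: "'t set \<Rightarrow> ('t \<times> 't) set \<Rightarrow> 't set \<Rightarrow> bool" where
  "rooted_subtree T le S \<longleftrightarrow> S \<subseteq> T \<and> (\<forall>t\<in>S. \<forall>s. (s, t) \<in> le \<longrightarrow> s \<in> S)"

definition T_graph :: "'t set \<Rightarrow> ('t \<times> 't) set \<Rightarrow> ('t \<times> 't) set \<Rightarrow> bool" where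
  "T_graph T le ET \<longleftrightarrow> graph T ET \<and> (\<forall>(s, t)\<in>ET. (s, t) \<in> le \<or> (t, s) \<in> le) \<and>
     (\<forall>t\<in>T. \<forall>s\<in>sdown le t. \<exists>u\<in>sdown le t. (u, t) \<in> ET \<and> (s, u) \<in> le)"

definition contraction :: "('v \<times> 'v) set \<Rightarrow> 't set \<Rightarrow> ('t \<Rightarrow> 'v set) \<Rightarrow> ('t \<times> 't) set" where
  "contraction E T Vt = {(s, t). s \<in> T \<and> t \<in> T \<and> s \<noteq> t \<and> (\<exists>x\<in>Vt s. \<exists>y\<in>Vt t. (x, y) \<in> E)}"

text \<open>Vertex set of G(S).\<close>
definition GS :: "('t \<Rightarrow> 'v set) \<Rightarrow> 't set \<Rightarrow> 'v set" where
  "GS Vt S = \<Union> (Vt ` S)"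

definition normal_semi_partition_tree ::
  "'v set \<Rightarrow> ('v \<times> 'v) set \<Rightarrow> 't set \<Rightarrow> ('t \<times> 't) set \<Rightarrow> ('t \<Rightarrow> 'v set) \<Rightarrow> bool" where
  "normal_semi_partition_tree V E T le Vt \<longleftrightarrow>
     order_tree T le \<and>
     (\<forall>t\<in>T. Vt t \<noteq> {} \<and> Vt t \<subseteq> V) \<and>
     (\<forall>s\<in>T. \<forall>t\<in>T. s \<noteq> t \<longrightarrow> Vt s \<inter> Vt t = {}) \<and>
     (\<forall>t\<in>T. connected_in E (Vt t)) \<and>
     T_graph T le (contraction E T Vt) \<and>
     (\<forall>p t t'. t \<in> T \<and> t' \<in> T \<and> gpath E p \<and> 2 \<le> length p \<and>
        hd p \<in> Vt t \<and> last p \<in> Vt t' \<and>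
        set (butlast (tl p)) \<inter> GS Vt T = {} \<and>
        (\<forall>i. Suc i < length p \<longrightarrow> \<not> (p ! i \<in> GS Vt T \<and> p ! Suc i \<in> GS Vt T))
        \<longrightarrow> (t, t') \<in> le \<or> (t', t) \<in> le)"

text \<open>Slim: |V_t| \<le> |height(t)| + aleph_0; the cardinality of height(t) is that of
  the strict down-closure of t.\<close>
definition slim :: "'t set \<Rightarrow> ('t \<times> 't) set \<Rightarrow> ('t \<Rightarrow> 'v set) \<Rightarrow> bool" where
  "slim T le Vt \<longleftrightarrow> (\<forall>t\<in>T. (card_of (Vt t), BNF_Cardinal_Arithmetic.csum (card_of (sdown le t)) natLeq) \<in> ordLeq)"

definition U_rooted_tree :: "'t set \<Rightarrow> ('t \<Rightarrow> 'v set) \<Rightarrow> 'v set \<Rightarrow> bool" where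
  "U_rooted_tree T Vt U \<longleftrightarrow> (\<forall>t\<in>T. Vt t \<inter> U \<noteq> {})"

definition cofinal_set :: "'a rel \<Rightarrow> 'a set \<Rightarrow> bool" where
  "cofinal_set r A \<longleftrightarrow> A \<subseteq> Field r \<and> (\<forall>a\<in>Field r. \<exists>b\<in>A. (a, b) \<in> r)"

text \<open>rI is (an isomorphic copy of) the initial ordinal cf(|T|): a cardinal order
  on I whose cardinality is the least cardinality of a cofinal subset of the
  initial ordinal |T|.\<close>
definition cf_index :: "'t set \<Rightarrow> 'i rel \<Rightarrow> 'i set \<Rightarrow> bool" where
  "cf_index T rI I \<longleftrightarrow> card_order_on I rI \<and>
     (\<exists>A. cofinal_set (card_of T) A \<and> (card_of I, card_of A) \<in> ordIso) \<and>
     (\<forall>A. cofinal_set (card_of T) A \<longrightarrow> (card_of I, card_of A) \<in> ordLeq)"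

definition is_limit :: "'i rel \<Rightarrow> 'i \<Rightarrow> bool" where
  "is_limit r i \<longleftrightarrow> i \<in> Field r \<and> (\<exists>j. (j, i) \<in> r \<and> j \<noteq> i) \<and>
     (\<forall>j. (j, i) \<in> r \<and> j \<noteq> i \<longrightarrow> (\<exists>k. (j, k) \<in> r \<and> j \<noteq> k \<and> (k, i) \<in> r \<and> k \<noteq> i))"

end

theory Submission
  imports Defs "HOL-Library.Countable_Set_Type"
begin

unbundle cardinal_syntax

definition neighbours_in :: "('v \<times> 'v) set \<Rightarrow> 'v set \<Rightarrow> 'v set \<Rightarrow> 'v set" where
  "neighbours_in E W Y = {w \<in> W. \<exists>y\<in>Y. (y, w) \<in> E}"

lemma finite_adhesion_iff:
  "finite_adhesion V E H U \<longleftrightarrow>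
     (\<forall>C. component_of E (V - H) C \<and> C \<inter> U \<noteq> {} \<longrightarrow> finite (neighbours_in E H C))"
  unfolding finite_adhesion_def neighbours_in_def ..

locale sym_edges =
  fixes E :: "('v \<times> 'v) set"
  assumes sym_E: "sym E"
begin

abbreviation reach :: "'v set \<Rightarrow> 'v \<Rightarrow> 'v \<Rightarrow> bool" where
  "reach Z x y \<equiv> (x, y) \<in> (E \<inter> Z \<times> Z)\<^sup>*"

lemma edge_sym: "(x, y) \<in> E \<Longrightarrow> (y, x) \<in> E"
  using sym_E by (rule symD)

lemma reach_mono: "reach Z x y \<Longrightarrow> Z \<subseteq> Z' \<Longrightarrow> reach Z' x y"
  by (meson Int_mono Sigma_mono order_refl rtrancl_mono subsetD)

lemma reach_sym: "reach Z x y \<Longrightarrow> reach Z y x"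
proof -
  have "sym (E \<inter> Z \<times> Z)" using sym_E unfolding sym_def by blast
  then have "sym ((E \<inter> Z \<times> Z)\<^sup>*)" by (rule sym_rtrancl)
  then show "reach Z x y \<Longrightarrow> reach Z y x" by (rule symD)
qed

lemma reach_closed: "reach Z x y \<Longrightarrow> x \<in> Z \<Longrightarrow> y \<in> Z"
  by (induction rule: rtrancl_induct) auto

lemma connected_in_reach: "connected_in E X \<Longrightarrow> u \<in> X \<Longrightarrow> v \<in> X \<Longrightarrow> reach X u v"
  unfolding connected_in_def by blast

lemma connected_in_star:
  assumes "u \<in> X" and "\<And>x. x \<in> X \<Longrightarrow> reach X x u"
  shows "connected_in E X"
  unfolding connected_in_def
proof (intro conjI ballI)
  fix x y assume "x \<in> X" "y \<in> X"
  then have "reach X x u" "reach X u y" using assms(2) reach_sym by blast+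
  then show "reach X x y" by (rule rtrancl_trans)
qed (use assms(1) in blast)

lemma connected_in_singleton: "connected_in E {x}"
  by (rule connected_in_star) auto

lemma connected_in_UN_common:
  assumes "\<And>i. i \<in> I \<Longrightarrow> connected_in E (P i) \<and> u \<in> P i"
  shows "connected_in E (insert u (\<Union>i\<in>I. P i))"
proof (rule connected_in_star)
  fix x assume "x \<in> insert u (\<Union>i\<in>I. P i)"
  then consider "x = u" | i where "i \<in> I" "x \<in> P i" by blast
  then show "reach (insert u (\<Union>i\<in>I. P i)) x u"
  proof cases
    case (2 i)
    then have "reach (P i) x u" using assms connected_in_reach by blast
    then show ?thesis by (rule reach_mono) (use 2 in blast)
  qed simp
qed simp

lemma connected_in_Un:
  assumes "connected_in E X" "connected_in E Y" "w \<in> X \<inter> Y"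
  shows "connected_in E (X \<union> Y)"
proof -
  have "connected_in E (insert w (\<Union>P\<in>{X, Y}. P))"
    by (rule connected_in_UN_common) (use assms in blast)
  then show ?thesis using assms(3) by (simp add: insert_absorb)
qed

lemma connected_in_Un_edge:
  assumes "connected_in E X" "connected_in E Y" "x \<in> X" "y \<in> Y" "(x, y) \<in> E"
  shows "connected_in E (X \<union> Y)"
proof -
  have "reach {x, y} z x" if "z \<in> {x, y}" for z
    using that assms(5) edge_sym by (auto intro: r_into_rtrancl)
  then have "connected_in E {x, y}" by (intro connected_in_star[of x]) auto
  then have "connected_in E (X \<union> {x, y})" using connected_in_Un assms(1,3) by blast
  then have "connected_in E ((X \<union> {x, y}) \<union> Y)" using connected_in_Un assms(2,4) by blast
  moreover have "(X \<union> {x, y}) \<union> Y = X \<union> Y" using assms(3,4) by auto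
  ultimately show ?thesis by simp
qed

lemma connected_in_insert_edge:
  assumes "connected_in E X" "x \<in> X" "(y, x) \<in> E"
  shows "connected_in E (insert y X)"
  using connected_in_Un_edge[OF connected_in_singleton assms(1) _ assms(2,3)] by simp

definition reach_class :: "'v set \<Rightarrow> 'v \<Rightarrow> 'v set" where
  "reach_class Z c = {x. reach Z c x}"

lemma reach_in_reach_class: "reach Z c x \<Longrightarrow> reach (reach_class Z c) c x"
proof (induction rule: rtrancl_induct)
  case (step y z)
  have "reach Z c z" using step(1,2) by (rule rtrancl_into_rtrancl)
  then have "(y, z) \<in> E \<inter> reach_class Z c \<times> reach_class Z c"
    using step(1,2) unfolding reach_class_def by blast
  with step.IH show ?case by (rule rtrancl_into_rtrancl)
qed simp

lemma connected_in_reach_class: "connected_in E (reach_class Z c)"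
proof (rule connected_in_star)
  show "c \<in> reach_class Z c" unfolding reach_class_def by simp
  show "reach (reach_class Z c) x c" if "x \<in> reach_class Z c" for x
    using that reach_in_reach_class reach_sym unfolding reach_class_def by blast
qed

lemma reach_class_subset: "c \<in> Z \<Longrightarrow> reach_class Z c \<subseteq> Z"
  unfolding reach_class_def using reach_closed by blast

lemma component_of_absorbs:
  assumes "component_of E Z C" "connected_in E D" "D \<subseteq> Z" "D \<inter> C \<noteq> {}"
  shows "D \<subseteq> C"
proof -
  have C: "C \<subseteq> Z" "connected_in E C" "\<And>D'. C \<subseteq> D' \<Longrightarrow> D' \<subseteq> Z \<Longrightarrow> connected_in E D' \<Longrightarrow> D' = C"
    using assms(1) unfolding component_of_def by blast+
  obtain w where "w \<in> C \<inter> D" using assms(4) by blast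
  then have "connected_in E (C \<union> D)" using connected_in_Un[OF C(2) assms(2)] by blast
  then have "C \<union> D = C" using C assms(3) by blast
  then show ?thesis by blast
qed

lemma reach_finite_connected:
  assumes "reach D u d" "u \<in> D"
  shows "\<exists>P. finite P \<and> P \<subseteq> D \<and> u \<in> P \<and> d \<in> P \<and> connected_in E P"
  using assms(1)
proof (induction rule: rtrancl_induct)
  case base
  show ?case using assms(2) connected_in_singleton by blast
next
  case (step x y)
  then obtain P where P: "finite P" "P \<subseteq> D" "u \<in> P" "x \<in> P" "connected_in E P" by blast
  have "connected_in E (insert y P)"
    using connected_in_insert_edge[OF P(5,4)] step(2) edge_sym by blast
  then show ?case using P step(2) by (intro exI[of _ "insert y P"]) auto
qed

lemma countable_connected_core:
  assumes D: "connected_in E D" and u: "u \<in> D" and W: "countable W"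
    and inf: "infinite (neighbours_in E W D)"
  shows "\<exists>Y \<subseteq> D. countable Y \<and> connected_in E Y \<and> u \<in> Y \<and> infinite (neighbours_in E W Y)"
proof -
  let ?N = "neighbours_in E W D"
  have "\<exists>P. finite P \<and> P \<subseteq> D \<and> connected_in E P \<and> u \<in> P \<and> w \<in> neighbours_in E W P"
    if w: "w \<in> ?N" for w
  proof -
    obtain d where d: "d \<in> D" "(d, w) \<in> E" "w \<in> W" using w unfolding neighbours_in_def by blast
    obtain P where "finite P" "P \<subseteq> D" "u \<in> P" "d \<in> P" "connected_in E P"
      using reach_finite_connected[OF connected_in_reach[OF D u d(1)] u] by blast
    then show ?thesis using d unfolding neighbours_in_def by blast
  qed
  then obtain P where P: "\<And>w. w \<in> ?N \<Longrightarrow>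
      finite (P w) \<and> P w \<subseteq> D \<and> connected_in E (P w) \<and> u \<in> P w \<and> w \<in> neighbours_in E W (P w)"
    by metis
  define Y where "Y = insert u (\<Union>w\<in>?N. P w)"
  have "countable ?N" using W unfolding neighbours_in_def by simp
  then have "countable (\<Union>w\<in>?N. P w)" using P by (blast intro: countable_UN countable_finite)
  then have "countable Y" unfolding Y_def by simp
  moreover have "connected_in E Y"
    unfolding Y_def by (rule connected_in_UN_common) (use P in blast)
  moreover have "?N \<subseteq> neighbours_in E W Y"
  proof
    fix w assume w: "w \<in> ?N"
    have "P w \<subseteq> Y" using w unfolding Y_def by blast
    then show "w \<in> neighbours_in E W Y" using P[OF w] unfolding neighbours_in_def by blast
  qed
  then have "infinite (neighbours_in E W Y)" using inf infinite_super by blast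
  moreover have "Y \<subseteq> D" "u \<in> Y" unfolding Y_def using P u by blast+
  ultimately show ?thesis by blast
qed
end
lemma gpath_snoc:
  assumes "gpath E p" "w \<notin> set p" "(last p, w) \<in> E"
  shows "gpath E (p @ [w])"
  unfolding gpath_def
proof (intro conjI allI impI)
  show "distinct (p @ [w])" using assms(1,2) unfolding gpath_def by simp
  fix i assume i: "Suc i < length (p @ [w])"
  show "((p @ [w]) ! i, (p @ [w]) ! Suc i) \<in> E"
  proof (cases "Suc i < length p")
    case True
    then show ?thesis using assms(1) unfolding gpath_def by (simp add: nth_append)
  next
    case False
    then have "i = length p - 1" using i by simp
    moreover have "p \<noteq> []" using assms(1) unfolding gpath_def by simp
    ultimately show ?thesis using assms(3) by (simp add: nth_append last_conv_nth)
  qed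
qed simp

lemma gpath_prefix:
  assumes "gpath E (xs @ ys)" "xs \<noteq> []"
  shows "gpath E xs"
  unfolding gpath_def
proof (intro conjI allI impI)
  fix i assume i: "Suc i < length xs"
  then have "(xs @ ys) ! i = xs ! i" "(xs @ ys) ! Suc i = xs ! Suc i" by (simp_all add: nth_append)
  moreover have "Suc i < length (xs @ ys)" using i by simp
  ultimately show "(xs ! i, xs ! Suc i) \<in> E" using assms(1) unfolding gpath_def by metis
qed (use assms in \<open>simp_all add: gpath_def\<close>)

lemma nth_in_set_tl: "0 < k \<Longrightarrow> k < length p \<Longrightarrow> p ! k \<in> set (tl p)"
  by (cases p) auto

lemma snoc_normality_conditions:
  assumes "2 \<le> length p" "set (tl p) \<inter> X = {}"
  shows "set (butlast (tl (p @ [w]))) \<inter> X = {}"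
    and "\<forall>i. Suc i < length (p @ [w]) \<longrightarrow> \<not> ((p @ [w]) ! i \<in> X \<and> (p @ [w]) ! Suc i \<in> X)"
proof -
  have "butlast (tl (p @ [w])) = tl p" using assms(1) by (cases p) simp_all
  then show "set (butlast (tl (p @ [w]))) \<inter> X = {}" using assms(2) by simp
  show "\<forall>i. Suc i < length (p @ [w]) \<longrightarrow> \<not> ((p @ [w]) ! i \<in> X \<and> (p @ [w]) ! Suc i \<in> X)"
  proof (intro allI impI)
    fix i assume i: "Suc i < length (p @ [w])"
    have "(p @ [w]) ! Suc i \<in> set (tl p) \<or> (p @ [w]) ! i \<in> set (tl p)"
    proof (cases "Suc i < length p")
      case True
      then have "(p @ [w]) ! Suc i = p ! Suc i" by (simp add: nth_append)
      then show ?thesis using nth_in_set_tl[of "Suc i" p] True by simp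
    next
      case False
      then have "i < length p" "0 < i" using i assms(1) by simp_all
      then have "(p @ [w]) ! i = p ! i" "p ! i \<in> set (tl p)" by (simp_all add: nth_append nth_in_set_tl)
      then show ?thesis by simp
    qed
    then show "\<not> ((p @ [w]) ! i \<in> X \<and> (p @ [w]) ! Suc i \<in> X)" using assms(2) by blast
  qed
qed

text \<open>A finite back-orientation charges every edge of A to one of its endvertices in such a
  way that every vertex is charged only finitely often: the orientation by an enumeration
  in which every vertex has only finitely many earlier neighbours.\<close>
definition finite_back_orientation :: "'a set \<Rightarrow> ('a \<times> 'a) set \<Rightarrow> ('a \<Rightarrow> 'a set) \<Rightarrow> bool" where
  "finite_back_orientation J A F \<longleftrightarrow>
     (\<forall>j\<in>J. finite (F j)) \<and> (\<forall>i\<in>J. \<forall>j\<in>J. (i, j) \<in> A \<longrightarrow> i \<in> F j \<or> j \<in> F i)"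

lemma countable_colouring_number_back_orientation:
  assumes "graph B EH" "countable_colouring_number B EH"
  shows "\<exists>F. finite_back_orientation B EH F"
proof -
  obtain r where r: "well_order_on B r" "\<forall>v\<in>B. finite {u\<in>B. (u, v) \<in> EH \<and> (u, v) \<in> r}"
    using assms(2) unfolding countable_colouring_number_def by blast
  define F where "F v = {u\<in>B. (u, v) \<in> EH \<and> (u, v) \<in> r}" for v
  have "u \<in> F v \<or> v \<in> F u" if uv: "u \<in> B" "v \<in> B" "(u, v) \<in> EH" for u v
  proof -
    have "total_on B r" using r(1) unfolding well_order_on_def linear_order_on_def by simp
    moreover have "u \<noteq> v" "(v, u) \<in> EH"
      using assms(1) uv(3) unfolding graph_def irrefl_def by (auto dest: symD)
    ultimately show ?thesis using uv unfolding F_def total_on_def by blast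
  qed
  then have "finite_back_orientation B EH F"
    using r(2) unfolding finite_back_orientation_def F_def by blast
  then show ?thesis by blast
qed

lemma finite_back_orientation_inj_image:
  assumes "finite_back_orientation (\<beta> ` J) (map_prod \<beta> \<beta> ` A) F" "inj_on \<beta> J"
  shows "finite_back_orientation J A (\<lambda>j. {i\<in>J. \<beta> i \<in> F (\<beta> j)})"
  unfolding finite_back_orientation_def
proof (intro conjI ballI impI)
  fix j assume "j \<in> J"
  then have "finite (F (\<beta> j))" using assms(1) unfolding finite_back_orientation_def by blast
  moreover have "inj_on \<beta> {i\<in>J. \<beta> i \<in> F (\<beta> j)}" using assms(2) by (rule inj_on_subset) blast
  ultimately show "finite {i\<in>J. \<beta> i \<in> F (\<beta> j)}" using inj_on_finite by blast
next
  fix i j assume ij: "i \<in> J" "j \<in> J" "(i, j) \<in> A"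
  then have "\<beta> i \<in> F (\<beta> j) \<or> \<beta> j \<in> F (\<beta> i)"
    using assms(1) unfolding finite_back_orientation_def by auto
  then show "i \<in> {k\<in>J. \<beta> k \<in> F (\<beta> j)} \<or> j \<in> {k\<in>J. \<beta> k \<in> F (\<beta> i)}"
    using ij by blast
qed

lemma finite_back_orientation_catch:
  assumes "finite_back_orientation J A F" "t \<in> J" "L \<subseteq> {u\<in>J. (u, t) \<in> A}" "infinite L"
  shows "\<exists>u\<in>L. t \<in> F u"
proof -
  have "finite (F t)" using assms(1,2) unfolding finite_back_orientation_def by blast
  then have "\<not> L \<subseteq> F t" using assms(4) finite_subset by blast
  then obtain u where u: "u \<in> L" "u \<notin> F t" by blast
  then have "u \<in> J" "(u, t) \<in> A" using assms(3) by blast+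
  then have "t \<in> F u" using u(2) assms(1,2) unfolding finite_back_orientation_def by blast
  then show ?thesis using u(1) by blast
qed

lemma finite_back_orientation_few_heavy:
  assumes "finite_back_orientation J A F" "X \<subseteq> J" "countable X"
  shows "countable {j\<in>J. infinite {i\<in>X. (i, j) \<in> A}}"
proof (rule countable_subset)
  show "{j\<in>J. infinite {i\<in>X. (i, j) \<in> A}} \<subseteq> (\<Union>i\<in>X. F i)"
  proof
    fix j assume j: "j \<in> {j\<in>J. infinite {i\<in>X. (i, j) \<in> A}}"
    have "{i\<in>X. (i, j) \<in> A} \<subseteq> {u\<in>J. (u, j) \<in> A}" using assms(2) by blast
    then obtain i where "i \<in> {i\<in>X. (i, j) \<in> A}" "j \<in> F i"
      using finite_back_orientation_catch[OF assms(1)] j by blast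
    then show "j \<in> (\<Union>i\<in>X. F i)" by blast
  qed
  have "finite (F i)" if "i \<in> X" for i
    using that assms(1,2) unfolding finite_back_orientation_def by blast
  then show "countable (\<Union>i\<in>X. F i)" using assms(3) by (simp add: countable_finite)
qed

lemma countable_inj_choice:
  assumes "countable W" "\<And>w. w \<in> W \<Longrightarrow> infinite (A w)"
  shows "\<exists>g. inj_on g W \<and> (\<forall>w\<in>W. g w \<in> A w)"
proof -
  obtain e :: "_ \<Rightarrow> nat" where e: "inj_on e W" using assms(1) unfolding countable_def by blast
  define Wn where "Wn n = {w\<in>W. e w < n}" for n
  have fin: "finite (Wn n)" for n
    by (rule inj_on_finite[of e _ "{..<n}"]) (use e in \<open>auto simp: Wn_def inj_on_def\<close>)
  define P where "P n f \<longleftrightarrow> inj_on f (Wn n) \<and> (\<forall>w\<in>Wn n. f w \<in> A w)" for n f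
  have step: "\<exists>f'. P (Suc n) f' \<and> (\<forall>w\<in>Wn n. f' w = f w)" if f: "P n f" for n f
  proof (cases "\<exists>w\<in>W. e w = n")
    case True
    then obtain w where w: "w \<in> W" "e w = n" by blast
    have "infinite (A w - f ` Wn n)" using assms(2)[OF w(1)] fin by (simp add: Diff_infinite_finite)
    then obtain x where x: "x \<in> A w" "x \<notin> f ` Wn n" using infinite_imp_nonempty by blast
    have Wn: "Wn (Suc n) = insert w (Wn n)" "w \<notin> Wn n"
      using w inj_onD[OF e] unfolding Wn_def by (auto simp: less_Suc_eq)
    have "P (Suc n) (f(w := x))"
      using f x Wn unfolding P_def by (auto simp: inj_on_def)
    then show ?thesis using Wn(2) by (intro exI[of _ "f(w := x)"]) auto
  next
    case False
    then have "Wn (Suc n) = Wn n" unfolding Wn_def by (auto simp: less_Suc_eq)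
    then show ?thesis using f unfolding P_def by (intro exI[of _ f]) simp
  qed
  have "P 0 f" for f unfolding P_def Wn_def by simp
  then obtain F where F: "\<And>n. P n (F n)" "\<And>n. \<forall>w\<in>Wn n. F (Suc n) w = F n w"
    using dependent_nat_choice[of P "\<lambda>n f f'. \<forall>w\<in>Wn n. f' w = f w"] step by blast
  have stable: "F (m + k) w = F m w" if "w \<in> Wn m" for m k w
  proof (induction k)
    case (Suc k)
    have "w \<in> Wn (m + k)" using that unfolding Wn_def by simp
    then show ?case using F(2) Suc by simp
  qed simp
  define g where "g w = F (Suc (e w)) w" for w
  have g: "g w = F m w" if "w \<in> W" "e w < m" for w m
  proof -
    have "w \<in> Wn (Suc (e w))" using that unfolding Wn_def by simp
    then show ?thesis using stable[of w "Suc (e w)" "m - Suc (e w)"] that unfolding g_def by simp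
  qed
  have "inj_on g W"
  proof (rule inj_onI)
    fix v w assume vw: "v \<in> W" "w \<in> W" "g v = g w"
    let ?m = "Suc (max (e v) (e w))"
    have "F ?m v = F ?m w" using vw g[of v ?m] g[of w ?m] by simp
    moreover have "v \<in> Wn ?m" "w \<in> Wn ?m" using vw unfolding Wn_def by auto
    ultimately show "v = w" using F(1)[of ?m] unfolding P_def inj_on_def by blast
  qed
  moreover have "g w \<in> A w" if "w \<in> W" for w
    using F(1)[of "Suc (e w)"] that unfolding g_def P_def Wn_def by simp
  ultimately show ?thesis by blast
qed

lemma uncountable_family_reduction:
  fixes N :: "'k \<Rightarrow> 'w set"
  assumes W: "countable W" and K: "uncountable K" and N: "\<And>t. t \<in> K \<Longrightarrow> N t \<subseteq> W"
  obtains W1 g K2 where "W1 \<subseteq> W" "K2 \<subseteq> K" "uncountable K2" "inj_on g W1" "g ` W1 \<subseteq> K - K2"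
    "\<forall>w\<in>W1. w \<in> N (g w)" "\<forall>t\<in>K2. N t \<subseteq> W1"
proof -
  define A where "A w = {t\<in>K. w \<in> N t}" for w
  define W1 where "W1 = {w\<in>W. uncountable (A w)}"
  define K1 where "K1 = K - (\<Union>w\<in>W - W1. A w)"
  have "countable (\<Union>w\<in>W - W1. A w)" using W unfolding W1_def by auto
  then have K1: "uncountable K1" unfolding K1_def by (rule uncountable_minus_countable[OF K])
  have "countable W1" using W unfolding W1_def by simp
  moreover have "infinite (A w)" if "w \<in> W1" for w using that countable_finite unfolding W1_def by blast
  ultimately obtain g where g: "inj_on g W1" "\<And>w. w \<in> W1 \<Longrightarrow> g w \<in> A w"
    using countable_inj_choice[of W1 A] by blast
  define K2 where "K2 = K1 - g ` W1"
  have "countable (g ` W1)" using \<open>countable W1\<close> by simp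
  then have "uncountable K2" unfolding K2_def by (rule uncountable_minus_countable[OF K1])
  moreover have "\<forall>t\<in>K2. N t \<subseteq> W1"
    using N unfolding K2_def K1_def A_def W1_def by blast
  moreover have "g ` W1 \<subseteq> K - K2" "\<forall>w\<in>W1. w \<in> N (g w)"
    using g(2) unfolding K2_def A_def by auto
  moreover have "W1 \<subseteq> W" "K2 \<subseteq> K" unfolding W1_def K2_def K1_def by auto
  ultimately show ?thesis using that[OF _ _ _ g(1)] by blast
qed

lemma finite_ordLess_infinite_card: "finite A \<Longrightarrow> infinite B \<Longrightarrow> |A| <o |B|"
  using finite_ordLess_infinite[OF card_of_Well_order card_of_Well_order] by (simp add: Field_card_of)

lemma countable_ordLess_uncountable: "countable A \<Longrightarrow> uncountable B \<Longrightarrow> |A| <o |B|"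
  by (meson card_of_Well_order countable_card_le_natLeq natLeq_Well_order
      not_ordLeq_iff_ordLess ordLeq_ordLess_trans)

lemma UN_countable_ordLess:
  assumes B: "uncountable B" and X: "|X| <o |B|" and f: "\<And>x. x \<in> X \<Longrightarrow> countable (f x)"
  shows "|\<Union>x\<in>X. f x| <o |B|"
proof (cases "finite X")
  case True
  then have "countable (\<Union>x\<in>X. f x)" using f by (simp add: countable_finite)
  then show ?thesis using countable_ordLess_uncountable B by blast
next
  case False
  have "|f x| \<le>o |X|" if "x \<in> X" for x
  proof -
    have "|f x| \<le>o natLeq" using f[OF that] countable_card_le_natLeq by blast
    moreover have "natLeq \<le>o |X|" using False infinite_iff_natLeq_ordLeq by blast
    ultimately show ?thesis by (rule ordLeq_transitive)
  qed
  then have "|\<Union>x\<in>X. f x| \<le>o |X|"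
    using card_of_UNION_ordLeq_infinite[OF False ordIso_imp_ordLeq[OF card_of_refl]] by blast
  then show ?thesis using X ordLeq_ordLess_trans by blast
qed

lemma finite_UN_ordLess_infinite:
  assumes "finite I" "infinite C" "\<And>i. i \<in> I \<Longrightarrow> |A i| <o |C|"
  shows "|\<Union>i\<in>I. A i| <o |C|"
  using assms
proof (induction rule: finite_induct)
  case empty
  then show ?case using finite_ordLess_infinite_card[of "{}" C] by simp
next
  case (insert i I)
  then have "|\<Union>i\<in>I. A i| <o |C|" "|A i| <o |C|" by simp_all
  then show ?case using card_of_Un_ordLess_infinite[OF insert.prems(1)] by simp
qed

lemma under_ordLess:
  assumes "Card_order r" "b \<in> Field r" "infinite (Field r)"
  shows "|under r b| <o r"
proof -
  have "|underS r b| <o r" using card_of_underS[OF assms(1,2)] .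
  moreover have "|{b}| <o r"
    using assms(1,3) card_of_Field_ordIso finite_ordLess_infinite_card ordLess_ordIso_trans by blast
  ultimately have "|{b} \<union> underS r b| <o r"
    using card_of_Un_ordLess_infinite_Field[OF assms(3,1)] by blast
  moreover have "under r b \<subseteq> {b} \<union> underS r b" unfolding under_def underS_def by blast
  ultimately show ?thesis using card_of_mono1 ordLeq_ordLess_trans by blast
qed

context wo_rel
begin

lemma exists_not_limit_below: "i \<in> Field r \<Longrightarrow> \<exists>m. (m, i) \<in> r \<and> \<not> is_limit r m"
proof -
  assume i: "i \<in> Field r"
  then obtain m where m: "m \<in> Field r" "\<And>j. (j, m) \<in> r - Id \<Longrightarrow> j \<notin> Field r"
    using wfE_min'[OF WF, of "Field r"] by blast
  have "\<not> is_limit r m" using m(2) unfolding is_limit_def by (auto intro: FieldI1)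
  moreover have "(m, i) \<in> r" using m i TOTALS REFL unfolding refl_on_def by blast
  ultimately show ?thesis by blast
qed

lemma exists_not_limit_above:
  assumes "(a, b) \<in> r" "b \<noteq> a"
  shows "\<exists>j. (a, j) \<in> r \<and> j \<noteq> a \<and> \<not> is_limit r j"
proof -
  let ?S = "{j. (a, j) \<in> r \<and> j \<noteq> a}"
  obtain j where j: "j \<in> ?S" "\<And>k. (k, j) \<in> r - Id \<Longrightarrow> k \<notin> ?S"
    using wfE_min'[OF WF, of ?S] assms by blast
  have "\<not> is_limit r j"
  proof
    assume "is_limit r j"
    then obtain k where "(a, k) \<in> r" "a \<noteq> k" "(k, j) \<in> r" "k \<noteq> j"
      using j(1) unfolding is_limit_def by blast
    then show False using j(2) by blast
  qed
  then show ?thesis using j(1) by blast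
qed

end

lemma infinite_card_of_no_max:
  assumes "infinite A" "a \<in> A"
  shows "\<exists>b\<in>A. (a, b) \<in> |A| \<and> b \<noteq> a"
proof (rule ccontr)
  assume "\<not> ?thesis"
  then have "A \<subseteq> under |A| a"
    using assms(2) wo_rel.TOTALS[of "|A|"] card_of_Well_order[of A]
    unfolding under_def wo_rel_def Field_card_of by blast
  then have "|A| \<le>o |under |A| a|" by (rule card_of_mono1)
  moreover have "|under |A| a| <o |A|"
    using under_ordLess[OF card_of_Card_order] assms by (simp add: Field_card_of)
  ultimately show False using not_ordLess_ordLeq by blast
qed

lemma countable_rtrancl_Image:
  assumes "\<And>x. countable (R `` {x})"
  shows "countable (R\<^sup>* `` {x})"
proof -
  have "countable ((R ^^ n) `` {x})" for n
  proof (induction n)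
    case (Suc n)
    have "(R ^^ Suc n) `` {x} = (\<Union>y\<in>(R ^^ n) `` {x}. R `` {y})" by auto
    then show ?case using Suc assms by simp
  qed simp
  moreover have "R\<^sup>* `` {x} = (\<Union>n. (R ^^ n) `` {x})" using rtrancl_power by blast
  ultimately show ?thesis by simp
qed

definition minimal_cofinal :: "'a set \<Rightarrow> 'a set \<Rightarrow> bool" where
  "minimal_cofinal T A \<longleftrightarrow>
     cofinal_set (card_of T) A \<and> (\<forall>B. cofinal_set (card_of T) B \<longrightarrow> (card_of A, card_of B) \<in> ordLeq)"

lemma minimal_cofinal_exists: "\<exists>A. minimal_cofinal T A"
proof -
  let ?C = "card_of ` {A. cofinal_set |T| A}"
  have "refl_on T |T|"
    using card_of_well_order_on[of T]
    unfolding well_order_on_def linear_order_on_def partial_order_on_def preorder_on_def by blast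
  then have "cofinal_set |T| T" unfolding cofinal_set_def Field_card_of refl_on_def by blast
  then obtain z where z: "z \<in> ?C" "\<And>y. (y, z) \<in> ordLess \<Longrightarrow> y \<notin> ?C"
    using wfE_min[OF wf_ordLess, of "|T|" ?C] by blast
  then obtain A where "cofinal_set |T| A" "z = |A|" by blast
  moreover have "|A| \<le>o |B|" if "cofinal_set |T| B" for B
    using z(2) that \<open>z = |A|\<close> not_ordLess_iff_ordLeq[OF card_of_Well_order card_of_Well_order] by blast
  ultimately show ?thesis unfolding minimal_cofinal_def by blast
qed

lemma minimal_cofinal_cf_index: "minimal_cofinal T A \<Longrightarrow> cf_index T |A| A"
  unfolding minimal_cofinal_def cf_index_def using card_of_card_order_on card_of_refl by blast

lemma minimal_cofinal_cofinal:
  "minimal_cofinal T A \<Longrightarrow> A \<subseteq> T \<and> (\<forall>x\<in>T. \<exists>a\<in>A. (x, a) \<in> card_of T)"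
  unfolding minimal_cofinal_def cofinal_set_def Field_card_of by blast

lemma minimal_cofinal_infinite:
  assumes T: "infinite T" and A: "minimal_cofinal T A"
  shows "infinite A"
proof
  assume "finite A"
  have "T \<subseteq> (\<Union>a\<in>A. under |T| a)"
    using minimal_cofinal_cofinal[OF A] unfolding under_def by blast
  moreover have "|\<Union>a\<in>A. under |T| a| <o |T|"
  proof (rule finite_UN_ordLess_infinite[OF \<open>finite A\<close> T])
    fix a assume "a \<in> A"
    then have "a \<in> T" using minimal_cofinal_cofinal[OF A] by blast
    then show "|under |T| a| <o |T|"
      using under_ordLess[OF card_of_Card_order, of a T] T by (simp add: Field_card_of)
  qed
  ultimately show False using card_of_mono1 not_ordLess_ordLeq by blast
qed

lemma minimal_cofinal_segments_bounded:
  assumes T: "infinite T" and A: "minimal_cofinal T A" and j: "j \<in> A"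
  shows "\<exists>a\<in>T. (\<Union>k\<in>under |A| j. under |T| k) \<subseteq> underS |T| a"
proof -
  have "|under |A| j| <o |A|"
    using under_ordLess[OF card_of_Card_order] minimal_cofinal_infinite[OF T A] j
    by (simp add: Field_card_of)
  then have "\<not> cofinal_set |T| (under |A| j)"
    using A not_ordLess_ordLeq unfolding minimal_cofinal_def by blast
  moreover have "under |A| j \<subseteq> T"
    using minimal_cofinal_cofinal[OF A] FieldI1[of _ j "|A|"] unfolding under_def Field_card_of by blast
  ultimately obtain a where a: "a \<in> T" "\<And>b. b \<in> under |A| j \<Longrightarrow> (a, b) \<notin> |T|"
    unfolding cofinal_set_def Field_card_of by blast
  have wo: "wo_rel |T|" unfolding wo_rel_def by (rule card_of_Well_order)
  have "x \<in> underS |T| a" if "k \<in> under |A| j" "(x, k) \<in> |T|" for k x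
  proof -
    have "k \<in> T" using that \<open>under |A| j \<subseteq> T\<close> by blast
    then have "(k, a) \<in> |T|"
      using a that(1) wo_rel.TOTALS[OF wo] by (auto simp: Field_card_of)
    then have "(x, a) \<in> |T|" using that(2) wo_rel.TRANS[OF wo] by (auto dest: transD)
    moreover have "x \<noteq> a" using a(2) that by blast
    ultimately show ?thesis unfolding underS_def by blast
  qed
  then show ?thesis using a(1) unfolding under_def by blast
qed

lemma small_increasing_exhaustion:
  assumes T: "uncountable T" and Z: "Z \<subseteq> T" "countable Z"
  shows "\<exists>A M. minimal_cofinal T A \<and>
           (\<forall>j\<in>A. Z \<subseteq> M j \<and> M j \<subseteq> T \<and> card_of (M j) <o card_of T) \<and>
           (\<forall>i j. (j, i) \<in> card_of A \<longrightarrow> M j \<subseteq> M i) \<and>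
           (\<forall>x\<in>T. \<exists>a\<in>A. \<forall>j. (a, j) \<in> card_of A \<longrightarrow> x \<in> M j)"
proof -
  have Tinf: "infinite T" using T countable_finite by blast
  obtain A where A: "minimal_cofinal T A" using minimal_cofinal_exists by blast
  define M where "M j = Z \<union> (\<Union>k\<in>under |A| j. under |T| k)" for j
  have "M j \<subseteq> T" for j
    using Z(1) FieldI1[of _ _ "|T|"] unfolding M_def under_def Field_card_of by blast
  moreover have "|M j| <o |T|" if j: "j \<in> A" for j
  proof -
    obtain a where "a \<in> T" "M j \<subseteq> Z \<union> underS |T| a"
      using minimal_cofinal_segments_bounded[OF Tinf A j] unfolding M_def by blast
    moreover have "|Z \<union> underS |T| a| <o |T|"
      using card_of_Un_ordLess_infinite[OF Tinf] countable_ordLess_uncountable[OF Z(2) T]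
        card_of_underS[OF card_of_Card_order, of a T] \<open>a \<in> T\<close> by (simp add: Field_card_of)
    ultimately show ?thesis using card_of_mono1 ordLeq_ordLess_trans by blast
  qed
  moreover have "M j \<subseteq> M i" if "(j, i) \<in> |A|" for i j
    using that wo_rel.TRANS[of "|A|"] card_of_Well_order[of A]
    unfolding M_def under_def wo_rel_def by (blast dest: transD)
  moreover have "\<exists>a\<in>A. \<forall>j. (a, j) \<in> |A| \<longrightarrow> x \<in> M j" if "x \<in> T" for x
    using that minimal_cofinal_cofinal[OF A] unfolding M_def under_def by blast
  moreover have "Z \<subseteq> M j" for j unfolding M_def by blast
  ultimately show ?thesis using A by (intro exI[of _ A] exI[of _ M]) blast
qed

lemma rtrancl_Image_subset: "R \<subseteq> T \<times> T \<Longrightarrow> X \<subseteq> T \<Longrightarrow> R\<^sup>* `` X \<subseteq> T"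
proof
  fix y assume R: "R \<subseteq> T \<times> T" and X: "X \<subseteq> T" and "y \<in> R\<^sup>* `` X"
  then obtain x where x: "x \<in> X" "(x, y) \<in> R\<^sup>*" by blast
  from x(2) show "y \<in> T" by (induction rule: rtrancl_induct) (use R X x(1) in auto)
qed

lemma rtrancl_Image_closed: "R `` (R\<^sup>* `` X) \<subseteq> R\<^sup>* `` X"
  by (auto intro: rtrancl_into_rtrancl)

lemma rtrancl_Image_ordLess:
  assumes "uncountable T" "\<And>x. countable (R `` {x})" "|X| <o |T|"
  shows "|R\<^sup>* `` X| <o |T|"
proof -
  have "R\<^sup>* `` X = (\<Union>x\<in>X. R\<^sup>* `` {x})" by auto
  then show ?thesis
    using UN_countable_ordLess[OF assms(1,3), of "\<lambda>x. R\<^sup>* `` {x}"]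
      countable_rtrancl_Image[OF assms(2)] by simp
qed

text \<open>Closing the small sets of an increasing exhaustion under R keeps them small; taking
  unions at limit indices, which only uses closures at successor indices, makes the chain
  continuous.\<close>
lemma closed_continuous_chain:
  fixes T :: "'t set" and R :: "('t \<times> 't) set"
  assumes T: "uncountable T" and R: "R \<subseteq> T \<times> T" "\<And>x. countable (R `` {x})"
  shows "\<exists>(I :: 't set) rI Ts. cf_index T rI I \<and>
     (\<forall>i\<in>I. Ts i \<subseteq> T \<and> R `` Ts i \<subseteq> Ts i \<and> infinite (Ts i) \<and> card_of (Ts i) <o card_of T) \<and>
     (\<forall>i\<in>I. \<forall>j\<in>I. (j, i) \<in> rI \<longrightarrow> Ts j \<subseteq> Ts i) \<and>
     (\<Union>i\<in>I. Ts i) = T \<and>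
     (\<forall>i\<in>I. is_limit rI i \<longrightarrow> Ts i = (\<Union>j\<in>{j\<in>I. (j, i) \<in> rI \<and> j \<noteq> i}. Ts j))"
proof -
  have Tinf: "infinite T" using T countable_finite by blast
  then obtain Z where Z: "Z \<subseteq> T" "countable Z" "infinite Z"
    using infinite_countable_subset' by blast
  obtain A M where A: "minimal_cofinal T A"
    and M: "\<And>j. j \<in> A \<Longrightarrow> Z \<subseteq> M j \<and> M j \<subseteq> T \<and> |M j| <o |T|"
    and M_mono: "\<And>i j. (j, i) \<in> |A| \<Longrightarrow> M j \<subseteq> M i"
    and M_cover: "\<And>x. x \<in> T \<Longrightarrow> \<exists>a\<in>A. \<forall>j. (a, j) \<in> |A| \<longrightarrow> x \<in> M j"
    using small_increasing_exhaustion[OF T Z(1,2)] by metis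
  define rI where "rI = |A|"
  have wo: "wo_rel rI" unfolding rI_def wo_rel_def by (rule card_of_Well_order)
  have FI: "Field rI = A" unfolding rI_def by (rule Field_card_of)
  define Ts where "Ts i = (\<Union>j\<in>{j\<in>A. (j, i) \<in> rI \<and> \<not> is_limit rI j}. R\<^sup>* `` M j)" for i
  have Ts_mono: "Ts j \<subseteq> Ts i" if "(j, i) \<in> rI" for i j
    using that wo_rel.TRANS[OF wo] unfolding Ts_def by (blast dest: transD)
  have Ts_M: "Ts i \<subseteq> R\<^sup>* `` M i" for i
    using M_mono unfolding Ts_def rI_def by blast
  have Ts_self: "R\<^sup>* `` M j \<subseteq> Ts i" if "j \<in> A" "(j, i) \<in> rI" "\<not> is_limit rI j" for i j
    using that unfolding Ts_def by blast
  have props: "Ts i \<subseteq> T \<and> R `` Ts i \<subseteq> Ts i \<and> infinite (Ts i) \<and> |Ts i| <o |T|"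
    if i: "i \<in> A" for i
  proof (intro conjI)
    show "Ts i \<subseteq> T" using M rtrancl_Image_subset[OF R(1)] unfolding Ts_def by blast
    show "R `` Ts i \<subseteq> Ts i"
      unfolding Ts_def Image_UN by (rule UN_mono) (simp_all add: rtrancl_Image_closed)
    obtain m where m: "(m, i) \<in> rI" "\<not> is_limit rI m"
      using wo_rel.exists_not_limit_below[OF wo] i FI by blast
    then have "m \<in> A" using FI by (auto intro: FieldI1)
    then have "Z \<subseteq> Ts i" using M Ts_self[OF _ m] by blast
    then show "infinite (Ts i)" using Z(3) infinite_super by blast
    have "|R\<^sup>* `` M i| <o |T|" using rtrancl_Image_ordLess[OF T R(2)] M[OF i] by blast
    then show "|Ts i| <o |T|" by (rule ordLeq_ordLess_trans[OF card_of_mono1[OF Ts_M]])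
  qed
  have "T \<subseteq> (\<Union>i\<in>A. Ts i)"
  proof
    fix x assume "x \<in> T"
    then obtain a where a: "a \<in> A" "\<And>j. (a, j) \<in> rI \<Longrightarrow> x \<in> M j"
      using M_cover unfolding rI_def by blast
    obtain b where "(a, b) \<in> rI" "b \<noteq> a"
      using infinite_card_of_no_max[OF minimal_cofinal_infinite[OF Tinf A] a(1)]
      unfolding rI_def by blast
    then obtain j where j: "(a, j) \<in> rI" "\<not> is_limit rI j"
      using wo_rel.exists_not_limit_above[OF wo] by blast
    then have "j \<in> A" "(j, j) \<in> rI" using FI wo_rel.REFL[OF wo] by (auto intro: FieldI2 refl_onD)
    moreover have "x \<in> R\<^sup>* `` M j" using a(2)[OF j(1)] by blast
    ultimately have "x \<in> Ts j" using Ts_self[of j j] j(2) by blast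
    then show "x \<in> (\<Union>i\<in>A. Ts i)" using \<open>j \<in> A\<close> by blast
  qed
  then have cover: "(\<Union>i\<in>A. Ts i) = T" using props by blast
  have limit: "Ts i = (\<Union>j\<in>{j\<in>A. (j, i) \<in> rI \<and> j \<noteq> i}. Ts j)" if "is_limit rI i" for i
  proof
    show "Ts i \<subseteq> (\<Union>j\<in>{j\<in>A. (j, i) \<in> rI \<and> j \<noteq> i}. Ts j)"
    proof
      fix x assume "x \<in> Ts i"
      then obtain j where j: "j \<in> A" "(j, i) \<in> rI" "\<not> is_limit rI j" "x \<in> R\<^sup>* `` M j"
        unfolding Ts_def by blast
      then have "x \<in> Ts j" using Ts_self wo_rel.REFL[OF wo] FI by (blast intro: refl_onD)
      then show "x \<in> (\<Union>j\<in>{j\<in>A. (j, i) \<in> rI \<and> j \<noteq> i}. Ts j)" using j that by blast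
    qed
  qed (use Ts_mono in blast)
  show ?thesis
  proof (intro exI conjI ballI impI)
    show "cf_index T rI A" unfolding rI_def by (rule minimal_cofinal_cf_index[OF A])
  qed (use props Ts_mono cover limit in \<open>simp_all\<close>)
qed

locale ord_tree =
  fixes T :: "'t set" and le :: "('t \<times> 't) set"
  assumes order_tree: "order_tree T le"
begin

lemma le_in_T: "(s, t) \<in> le \<Longrightarrow> s \<in> T \<and> t \<in> T"
  using order_tree unfolding order_tree_def by blast

lemma le_refl: "t \<in> T \<Longrightarrow> (t, t) \<in> le"
  using order_tree
  unfolding order_tree_def partial_order_on_def preorder_on_def refl_on_def by blast

lemma le_trans: "(a, b) \<in> le \<Longrightarrow> (b, c) \<in> le \<Longrightarrow> (a, c) \<in> le"
  using order_tree unfolding order_tree_def partial_order_on_def preorder_on_def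
  by (blast dest: transD)

lemma le_antisym: "(a, b) \<in> le \<Longrightarrow> (b, a) \<in> le \<Longrightarrow> a = b"
  using order_tree unfolding order_tree_def partial_order_on_def by (blast dest: antisymD)

lemma down_well_order: "t \<in> T \<Longrightarrow> well_order_on (down le t) (le \<inter> down le t \<times> down le t)"
  using order_tree unfolding order_tree_def by blast

lemma below_comparable:
  assumes "(a, t) \<in> le" "(b, t) \<in> le"
  shows "(a, b) \<in> le \<or> (b, a) \<in> le"
proof -
  have "t \<in> T" "a \<in> T" using assms(1) le_in_T by blast+
  then have "total_on (down le t) (le \<inter> down le t \<times> down le t)"
    using down_well_order unfolding well_order_on_def linear_order_on_def by blast
  moreover have "a \<in> down le t" "b \<in> down le t" using assms unfolding down_def by auto
  ultimately have "a = b \<or> (a, b) \<in> le \<or> (b, a) \<in> le" unfolding total_on_def by blast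
  then show ?thesis using le_refl[OF \<open>a \<in> T\<close>] by blast
qed

lemma least_in_down:
  assumes "A \<subseteq> down le t" "A \<noteq> {}"
  shows "\<exists>m\<in>A. \<forall>a\<in>A. (m, a) \<in> le"
proof -
  let ?r = "le \<inter> down le t \<times> down le t"
  have "t \<in> T" using assms le_in_T unfolding down_def by blast
  then have "wf (?r - Id)" using down_well_order unfolding well_order_on_def by blast
  then obtain m where m: "m \<in> A" "\<And>y. (y, m) \<in> ?r - Id \<Longrightarrow> y \<notin> A"
    using wfE_min'[of _ A] assms(2) by metis
  have "(m, a) \<in> le" if a: "a \<in> A" for a
  proof -
    have "(m, t) \<in> le" "(a, t) \<in> le" using m(1) a assms(1) unfolding down_def by auto
    then consider "(m, a) \<in> le" | "(a, m) \<in> le" "a \<noteq> m" | "a = m"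
      using below_comparable by blast
    then show ?thesis
    proof cases
      case 2
      then have "(a, m) \<in> ?r - Id" using a m(1) assms(1) by blast
      then show ?thesis using m(2) a by blast
    qed (use le_refl le_in_T \<open>(m, t) \<in> le\<close> in auto)
  qed
  then show ?thesis using m(1) by blast
qed

lemma minimal_exists:
  assumes "A \<subseteq> T" "A \<noteq> {}"
  shows "\<exists>m\<in>A. \<forall>a\<in>A. (a, m) \<in> le \<longrightarrow> a = m"
proof -
  obtain t where t: "t \<in> A" using assms by blast
  then have "A \<inter> down le t \<noteq> {}" using le_refl assms(1) unfolding down_def by blast
  then obtain m where m: "m \<in> A \<inter> down le t" "\<forall>a\<in>A \<inter> down le t. (m, a) \<in> le"
    using least_in_down[of "A \<inter> down le t" t] by blast
  have "a = m" if "a \<in> A" "(a, m) \<in> le" for a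
  proof -
    have "a \<in> down le t" using that m(1) le_trans unfolding down_def by blast
    then show ?thesis using m that le_antisym by blast
  qed
  then show ?thesis using m(1) by blast
qed

lemma root_exists: "\<exists>r\<in>T. \<forall>t\<in>T. (r, t) \<in> le"
proof -
  obtain r where r: "r \<in> T" "\<forall>s\<in>T. (s, r) \<in> le \<longrightarrow> s = r"
    and uniq: "\<And>r'. r' \<in> T \<Longrightarrow> \<forall>s\<in>T. (s, r') \<in> le \<longrightarrow> s = r' \<Longrightarrow> r' = r"
    using order_tree unfolding order_tree_def Ex1_def by metis
  have "(r, t) \<in> le" if t: "t \<in> T" for t
  proof -
    obtain m where m: "m \<in> down le t" "\<forall>a\<in>down le t. (m, a) \<in> le"
      using least_in_down[of "down le t" t] le_refl[OF t] unfolding down_def by blast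
    have "s = m" if "s \<in> T" "(s, m) \<in> le" for s
      using that m le_trans le_antisym unfolding down_def by blast
    then have "m = r" using uniq m(1) le_in_T unfolding down_def by blast
    then show ?thesis using m(1) unfolding down_def by blast
  qed
  then show ?thesis using r(1) by blast
qed

lemma finite_chain_max:
  assumes "finite F" "F \<noteq> {}" "F \<subseteq> down le t"
  shows "\<exists>m\<in>F. \<forall>x\<in>F. (x, m) \<in> le"
  using assms
proof (induction rule: finite_ne_induct)
  case (singleton x)
  then show ?case using le_refl le_in_T unfolding down_def by blast
next
  case (insert x F)
  then obtain m where m: "m \<in> F" "\<forall>y\<in>F. (y, m) \<in> le" by blast
  have xm: "(x, t) \<in> le" "(m, t) \<in> le" using insert(5) m(1) unfolding down_def by auto
  then consider "(x, m) \<in> le" | "(m, x) \<in> le" using below_comparable by blast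
  then show ?case
  proof cases
    case 2
    then show ?thesis using m le_trans le_refl le_in_T xm(1) by blast
  qed (use m in blast)
qed

lemma above_comparable:
  assumes "(t, a) \<in> le" "(a, b) \<in> le \<or> (b, a) \<in> le" "b \<in> T" "b \<notin> sdown le t"
  shows "(t, b) \<in> le"
  using assms(2)
proof
  assume "(b, a) \<in> le"
  then have "(b, t) \<in> le \<or> (t, b) \<in> le" using below_comparable assms(1) by blast
  then show ?thesis using assms(3,4) le_refl unfolding sdown_def by blast
qed (use assms(1) le_trans in blast)

definition limit_node :: "'t \<Rightarrow> bool" where
  "limit_node t \<longleftrightarrow> sdown le t \<noteq> {} \<and> (\<forall>m\<in>sdown le t. \<exists>s\<in>sdown le t. (m, s) \<in> le \<and> m \<noteq> s)"

lemma node_cases: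
  assumes "t \<in> T"
  obtains "sdown le t = {}"
    | p where "p \<in> sdown le t" "sdown le t = down le p"
    | "limit_node t"
proof (cases "\<exists>p\<in>sdown le t. \<forall>x\<in>sdown le t. (x, p) \<in> le")
  case True
  then obtain p where p: "p \<in> sdown le t" "\<forall>x\<in>sdown le t. (x, p) \<in> le" by blast
  have "sdown le t = down le p"
    using p le_trans le_antisym unfolding sdown_def down_def by blast
  then show ?thesis using that(2) p(1) by blast
next
  case False
  have "\<exists>s\<in>sdown le t. (m, s) \<in> le \<and> m \<noteq> s" if m: "m \<in> sdown le t" for m
  proof -
    obtain x where x: "x \<in> sdown le t" "(x, m) \<notin> le" using False m by blast
    then have "(m, x) \<in> le" using below_comparable m unfolding sdown_def by blast
    moreover have "m \<noteq> x" using x(2) m le_refl le_in_T unfolding sdown_def by blast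
    ultimately show ?thesis using x(1) by blast
  qed
  then show ?thesis using that(1,3) unfolding limit_node_def by blast
qed

end

context ord_tree
begin

lemma down_eq_insert_sdown: "p \<in> T \<Longrightarrow> down le p = insert p (sdown le p)"
  using le_refl unfolding down_def sdown_def by blast

lemma countable_down:
  assumes "d \<in> sdown le t" "\<And>d. d \<in> sdown le t \<Longrightarrow> countable (sdown le d)"
  shows "countable (down le d)"
proof -
  have "d \<in> T" using assms(1) le_in_T unfolding sdown_def by blast
  then show ?thesis using assms down_eq_insert_sdown by simp
qed

lemma countable_strictly_bounded:
  assumes t: "uncountable (sdown le t)" and cnt: "\<And>d. d \<in> sdown le t \<Longrightarrow> countable (sdown le d)"
    and F: "countable F" "F \<subseteq> sdown le t"
  shows "\<exists>q\<in>sdown le t. \<forall>f\<in>F. (f, q) \<in> le \<and> f \<noteq> q"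
proof -
  have "countable (down le f)" if "f \<in> F" for f using that F(2) countable_down[OF _ cnt] by blast
  then have "countable (\<Union>f\<in>F. down le f)" using F(1) by blast
  then have "\<not> sdown le t \<subseteq> (\<Union>f\<in>F. down le f)" using t countable_subset by blast
  then obtain q where q: "q \<in> sdown le t" "q \<notin> (\<Union>f\<in>F. down le f)" by blast
  have "(f, q) \<in> le \<and> f \<noteq> q" if f: "f \<in> F" for f
  proof -
    have "(q, f) \<notin> le" using q(2) f unfolding down_def by blast
    moreover have "(f, t) \<in> le" "(q, t) \<in> le" using f F(2) q(1) unfolding sdown_def by blast+
    ultimately have "(f, q) \<in> le" using below_comparable by blast
    moreover have "f \<noteq> q" using \<open>(q, f) \<notin> le\<close> le_refl le_in_T calculation by blast
    ultimately show ?thesis by blast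
  qed
  then show ?thesis using q(1) by blast
qed

text \<open>The idea of the argument: along an \<open>\<omega>\<close>-sequence climbing past all the
  countably many B-values met so far, the supremum of the sequence is a limit node
  closed under B.\<close>
lemma uncountable_height_closure_point:
  assumes t: "uncountable (sdown le t)" and cnt: "\<And>d. d \<in> sdown le t \<Longrightarrow> countable (sdown le d)"
    and B: "\<And>d. d \<in> sdown le t \<Longrightarrow> countable (B d)"
  shows "\<exists>a\<in>sdown le t. limit_node a \<and> (\<forall>u\<in>sdown le a. \<forall>x\<in>B u \<inter> sdown le t. (x, a) \<in> le \<and> x \<noteq> a)"
proof -
  let ?Q = "sdown le t"
  have Q_down: "down le d \<subseteq> ?Q" if "d \<in> ?Q" for d
    using that le_trans le_antisym unfolding sdown_def down_def by blast
  define C where "C d = insert d (\<Union>b\<in>down le d. B b \<inter> ?Q)" for d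
  have C: "countable (C d) \<and> C d \<subseteq> ?Q" if d: "d \<in> ?Q" for d
  proof
    have "B b \<inter> ?Q \<subseteq> ?Q" "countable (B b)" if "b \<in> down le d" for b
      using that Q_down[OF d] B by blast+
    then show "countable (C d)" using countable_down[OF d cnt] unfolding C_def by simp
    show "C d \<subseteq> ?Q" using d unfolding C_def by blast
  qed
  obtain q0 where "q0 \<in> ?Q" using t by (metis countable_empty ex_in_conv)
  moreover have "\<exists>q. q \<in> ?Q \<and> (\<forall>f\<in>C d. (f, q) \<in> le \<and> f \<noteq> q)" if "d \<in> ?Q" for d
    using countable_strictly_bounded[OF t cnt] C[OF that] by blast
  ultimately obtain dl where dl: "\<And>n. dl n \<in> ?Q" "\<And>n. \<forall>f\<in>C (dl n). (f, dl (Suc n)) \<in> le \<and> f \<noteq> dl (Suc n)"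
    using dependent_nat_choice[of "\<lambda>_ q. q \<in> ?Q" "\<lambda>_ d q. \<forall>f\<in>C d. (f, q) \<in> le \<and> f \<noteq> q"] by metis
  have dl_step: "(dl n, dl (Suc n)) \<in> le" "dl n \<noteq> dl (Suc n)" for n
    using dl(2)[of n] unfolding C_def by blast+
  define Up where "Up = {q\<in>?Q. \<forall>n. (dl n, q) \<in> le \<and> dl n \<noteq> q}"
  have "countable (range dl)" "range dl \<subseteq> ?Q" using dl(1) by auto
  note countable_strictly_bounded[OF t cnt this]
  then obtain q where "q \<in> ?Q" "\<forall>f\<in>range dl. (f, q) \<in> le \<and> f \<noteq> q" by blast
  then have "Up \<noteq> {}" unfolding Up_def by blast
  moreover have "Up \<subseteq> down le t" unfolding Up_def sdown_def down_def by blast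
  ultimately obtain a where a: "a \<in> Up" "\<And>x. x \<in> Up \<Longrightarrow> (a, x) \<in> le"
    using least_in_down[of Up t] by blast
  have a_Q: "a \<in> ?Q" and dl_a: "\<And>n. (dl n, a) \<in> le \<and> dl n \<noteq> a" using a(1) unfolding Up_def by blast+
  have below: "\<exists>n. (s, dl n) \<in> le" if s: "s \<in> sdown le a" for s
  proof (rule ccontr)
    assume "\<nexists>n. (s, dl n) \<in> le"
    moreover have s_Q: "s \<in> ?Q" using Q_down[OF a_Q] s unfolding sdown_def down_def by blast
    ultimately have "(dl n, s) \<in> le \<and> dl n \<noteq> s" for n
      using below_comparable[of "dl n" t s] dl(1) le_refl[of s] le_in_T unfolding sdown_def by blast
    then have "s \<in> Up" using s_Q unfolding Up_def by blast
    then show False using a(2) s le_antisym unfolding sdown_def by blast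
  qed
  have "limit_node a" unfolding limit_node_def
  proof
    show "sdown le a \<noteq> {}" using dl_a[of 0] unfolding sdown_def by blast
    show "\<forall>m\<in>sdown le a. \<exists>s\<in>sdown le a. (m, s) \<in> le \<and> m \<noteq> s"
    proof
      fix m assume "m \<in> sdown le a"
      then obtain n where n: "(m, dl n) \<in> le" using below by blast
      then have "(m, dl (Suc n)) \<in> le" "m \<noteq> dl (Suc n)"
        using dl_step[of n] le_trans le_antisym by blast+
      then show "\<exists>s\<in>sdown le a. (m, s) \<in> le \<and> m \<noteq> s" using dl_a unfolding sdown_def by blast
    qed
  qed
  moreover have "(x, a) \<in> le \<and> x \<noteq> a" if u: "u \<in> sdown le a" and x: "x \<in> B u \<inter> ?Q" for u x
  proof -
    obtain n where "(u, dl n) \<in> le" using below u by blast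
    then have "x \<in> C (dl n)" using x unfolding C_def down_def by blast
    then have "(x, dl (Suc n)) \<in> le" "x \<noteq> dl (Suc n)" using dl(2) by blast+
    then show ?thesis using dl_a[of "Suc n"] le_trans le_antisym by blast
  qed
  ultimately show ?thesis using a_Q by blast
qed

end

locale normal_tree =
  fixes V :: "'v set" and E :: "('v \<times> 'v) set"
    and T :: "'t set" and le :: "('t \<times> 't) set" and Vt :: "'t \<Rightarrow> 'v set"
  assumes graph: "graph V E" and nspt: "normal_semi_partition_tree V E T le Vt"

sublocale normal_tree \<subseteq> ord_tree T le
  using nspt unfolding normal_semi_partition_tree_def by unfold_locales blast

sublocale normal_tree \<subseteq> sym_edges E
  using graph unfolding graph_def by unfold_locales blast

context normal_tree
begin

lemma edge_irrefl: "(x, y) \<in> E \<Longrightarrow> x \<noteq> y"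
  using graph unfolding graph_def irrefl_def by blast

lemma Vt_nonempty: "t \<in> T \<Longrightarrow> Vt t \<noteq> {}"
  using nspt unfolding normal_semi_partition_tree_def by blast

lemma Vt_subset: "t \<in> T \<Longrightarrow> Vt t \<subseteq> V"
  using nspt unfolding normal_semi_partition_tree_def by blast

lemma Vt_disjoint: "s \<in> T \<Longrightarrow> t \<in> T \<Longrightarrow> s \<noteq> t \<Longrightarrow> Vt s \<inter> Vt t = {}"
  using nspt unfolding normal_semi_partition_tree_def by blast

lemma Vt_unique: "s \<in> T \<Longrightarrow> t \<in> T \<Longrightarrow> x \<in> Vt s \<Longrightarrow> x \<in> Vt t \<Longrightarrow> s = t"
  using Vt_disjoint by blast

lemma Vt_connected: "t \<in> T \<Longrightarrow> connected_in E (Vt t)"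
  using nspt unfolding normal_semi_partition_tree_def by blast

lemma in_GS_iff: "x \<in> GS Vt S \<longleftrightarrow> (\<exists>s\<in>S. x \<in> Vt s)"
  unfolding GS_def by blast

lemma contraction_iff:
  "(s, t) \<in> contraction E T Vt \<longleftrightarrow> s \<in> T \<and> t \<in> T \<and> s \<noteq> t \<and> (\<exists>x\<in>Vt s. \<exists>y\<in>Vt t. (x, y) \<in> E)"
  unfolding contraction_def by blast

lemma contraction_comparable: "(s, t) \<in> contraction E T Vt \<Longrightarrow> (s, t) \<in> le \<or> (t, s) \<in> le"
  using nspt unfolding normal_semi_partition_tree_def T_graph_def by blast

lemma contraction_cofinal:
  "t \<in> T \<Longrightarrow> s \<in> sdown le t \<Longrightarrow> \<exists>u\<in>sdown le t. (u, t) \<in> contraction E T Vt \<and> (s, u) \<in> le"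
  using nspt unfolding normal_semi_partition_tree_def T_graph_def by blast

lemma normal_path:
  assumes "t \<in> T" "t' \<in> T" "gpath E p" "2 \<le> length p" "hd p \<in> Vt t" "last p \<in> Vt t'"
    "set (butlast (tl p)) \<inter> GS Vt T = {}"
    "\<forall>i. Suc i < length p \<longrightarrow> \<not> (p ! i \<in> GS Vt T \<and> p ! Suc i \<in> GS Vt T)"
  shows "(t, t') \<in> le \<or> (t', t) \<in> le"
  using nspt assms unfolding normal_semi_partition_tree_def by blast

lemma limit_node_infinite_lower_neighbours:
  assumes t: "t \<in> T" and lim: "limit_node t"
  shows "infinite {u\<in>sdown le t. (u, t) \<in> contraction E T Vt}"
proof
  let ?L = "{u\<in>sdown le t. (u, t) \<in> contraction E T Vt}"
  assume fin: "finite ?L"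
  obtain s0 where "s0 \<in> sdown le t" using lim unfolding limit_node_def by blast
  then have "?L \<noteq> {}" using contraction_cofinal[OF t] by blast
  moreover have "?L \<subseteq> down le t" unfolding sdown_def down_def by blast
  ultimately obtain m where m: "m \<in> ?L" "\<forall>x\<in>?L. (x, m) \<in> le"
    using finite_chain_max[OF fin] by blast
  obtain s where s: "s \<in> sdown le t" "(m, s) \<in> le" "m \<noteq> s"
    using lim m(1) unfolding limit_node_def by blast
  obtain u where u: "u \<in> ?L" "(s, u) \<in> le" using contraction_cofinal[OF t s(1)] by blast
  have "(u, m) \<in> le" using m(2) u(1) by blast
  then have "m = s" using s(2) u(2) le_trans le_antisym by blast
  then show False using s(3) by blast
qed

end

context normal_tree
begin

text \<open>z is linked to the node a through Z if a path in Z leads from V_a to z and has all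
  vertices but the first outside the tree part G(T); for z in G(T) this just says z in V_a.\<close>
definition linked :: "'v set \<Rightarrow> 't \<Rightarrow> 'v \<Rightarrow> bool" where
  "linked Z a z \<longleftrightarrow>
     (\<exists>p. gpath E p \<and> hd p \<in> Vt a \<and> last p = z \<and> set (tl p) \<inter> GS Vt T = {} \<and> set p \<subseteq> Z)"

lemma linked_start: "v \<in> Vt a \<Longrightarrow> v \<in> Z \<Longrightarrow> linked Z a v"
  unfolding linked_def gpath_def by (intro exI[of _ "[v]"]) simp

lemma linked_in_branch:
  assumes "linked Z a z" "a \<in> T" "b \<in> T" "z \<in> Vt b"
  shows "a = b"
proof -
  obtain p where p: "gpath E p" "hd p \<in> Vt a" "last p = z" "set (tl p) \<inter> GS Vt T = {}"
    using assms(1) unfolding linked_def by blast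
  have "p \<noteq> []" using p(1) unfolding gpath_def by blast
  have "z \<in> GS Vt T" using assms(3,4) unfolding GS_def by blast
  then have "tl p = []" using p(3,4) \<open>p \<noteq> []\<close> last_tl[of p] last_in_set[of "tl p"] by fastforce
  then have "z = hd p" using p(3) \<open>p \<noteq> []\<close> by (cases p) auto
  then show ?thesis using Vt_unique assms p(2) by blast
qed

lemma linked_edge_comparable:
  assumes "linked Z a c" "(c, h) \<in> E" "h \<in> Vt b" "a \<in> T" "b \<in> T"
  shows "(a, b) \<in> le \<or> (b, a) \<in> le"
proof -
  obtain p where p: "gpath E p" "hd p \<in> Vt a" "last p = c" "set (tl p) \<inter> GS Vt T = {}"
    using assms(1) unfolding linked_def by blast
  have "p \<noteq> []" using p(1) unfolding gpath_def by blast
  have hG: "h \<in> GS Vt T" using assms(3,5) unfolding GS_def by blast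
  consider "a = b" | "a \<noteq> b" "tl p = []" | "h \<notin> set p" "2 \<le> length p"
  proof (cases "h \<in> set p")
    case True
    then have "h = hd p" using hG p(4) \<open>p \<noteq> []\<close> by (cases p) auto
    then show ?thesis using that(1) Vt_unique assms(3-5) p(2) by blast
  next
    case False
    show ?thesis
    proof (cases "tl p = []")
      case True
      then show ?thesis using that(1,2) by blast
    next
      case nonempty: False
      then have "2 \<le> length p" using \<open>p \<noteq> []\<close> by (cases p) (auto simp: Suc_le_eq)
      then show ?thesis using that(3) False by blast
    qed
  qed
  then show ?thesis
  proof cases
    case 1
    then show ?thesis using le_refl assms(4) by blast
  next
    case 2
    then have "c \<in> Vt a" using p(2,3) \<open>p \<noteq> []\<close> by (cases p) auto
    then have "(a, b) \<in> contraction E T Vt"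
      using 2(1) assms(2-5) unfolding contraction_iff by blast
    then show ?thesis by (rule contraction_comparable)
  next
    case 3
    have "gpath E (p @ [h])" using gpath_snoc[OF p(1) 3(1)] assms(2) p(3) by simp
    moreover have "hd (p @ [h]) \<in> Vt a" using p(2) \<open>p \<noteq> []\<close> by simp
    ultimately show ?thesis
      using normal_path[OF assms(4,5)] snoc_normality_conditions[OF 3(2) p(4)] 3(2) assms(3) by simp
  qed
qed

lemma linked_extend:
  assumes "linked Z a y" "(y, z) \<in> E" "z \<in> Z" "z \<notin> GS Vt T" "a \<in> T"
  shows "linked Z a z"
proof -
  obtain p where p: "gpath E p" "hd p \<in> Vt a" "last p = y" "set (tl p) \<inter> GS Vt T = {}" "set p \<subseteq> Z"
    using assms(1) unfolding linked_def by blast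
  have "p \<noteq> []" using p(1) unfolding gpath_def by blast
  have hdG: "hd p \<in> GS Vt T" using p(2) assms(5) unfolding GS_def by blast
  show ?thesis
  proof (cases "z \<in> set p")
    case True
    then obtain xs ys where split: "p = xs @ z # ys" by (meson split_list)
    have "xs \<noteq> []" using split hdG assms(4) by auto
    then have "gpath E (xs @ [z])" using p(1) split gpath_prefix[of E "xs @ [z]" ys] by simp
    moreover have "hd (xs @ [z]) = hd p" using split \<open>xs \<noteq> []\<close> by simp
    moreover have "set (tl (xs @ [z])) \<subseteq> set (tl p)" using split \<open>xs \<noteq> []\<close> by (cases xs) auto
    moreover have "set (xs @ [z]) \<subseteq> Z" using split p(5) by auto
    ultimately show ?thesis using p(2,4) unfolding linked_def by (intro exI[of _ "xs @ [z]"]) auto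
  next
    case False
    have "gpath E (p @ [z])" using gpath_snoc[OF p(1) False] p(3) assms(2) by simp
    moreover have "set (tl (p @ [z])) \<subseteq> insert z (set (tl p))" using \<open>p \<noteq> []\<close> by (cases p) auto
    ultimately show ?thesis
      using p(2,4,5) assms(3,4) \<open>p \<noteq> []\<close> unfolding linked_def by (intro exI[of _ "p @ [z]"]) auto
  qed
qed

text \<open>The heart of normality: what can be reached from V_t while avoiding G of the nodes
  below t stays above t.\<close>
lemma reach_linked_above:
  assumes t: "t \<in> T" and Z: "Z \<inter> GS Vt (sdown le t) = {}" and v0: "v0 \<in> Vt t" "v0 \<in> Z"
    and r: "reach Z v0 z"
  shows "\<exists>a. (t, a) \<in> le \<and> linked Z a z"
  using r
proof (induction rule: rtrancl_induct)
  case base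
  show ?case using linked_start[OF v0] le_refl[OF t] by blast
next
  case (step y z)
  then obtain a where a: "(t, a) \<in> le" "linked Z a y" by blast
  have yz: "(y, z) \<in> E" "z \<in> Z" using step(2) by blast+
  have aT: "a \<in> T" using a(1) le_in_T by blast
  show ?case
  proof (cases "z \<in> GS Vt T")
    case True
    then obtain b where b: "b \<in> T" "z \<in> Vt b" unfolding GS_def by blast
    have "b \<notin> sdown le t" using Z yz(2) b(2) unfolding GS_def by blast
    moreover have "(a, b) \<in> le \<or> (b, a) \<in> le"
      using linked_edge_comparable[OF a(2) yz(1) b(2) aT b(1)] .
    ultimately have "(t, b) \<in> le" using above_comparable[OF a(1) _ b(1)] by blast
    then show ?thesis using linked_start[OF b(2) yz(2)] by blast
  next
    case False
    then show ?thesis using linked_extend[OF a(2) yz _ aT] a(1) by blast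
  qed
qed

end

context normal_tree
begin

definition branch_component :: "'t \<Rightarrow> 'v set" where
  "branch_component t = reach_class (V - GS Vt (sdown le t)) (SOME v. v \<in> Vt t)"

lemma Vt_avoids_below: "t \<in> T \<Longrightarrow> Vt t \<subseteq> V - GS Vt (sdown le t)"
  using Vt_subset Vt_unique le_in_T unfolding GS_def sdown_def by blast

lemma some_in_Vt: "t \<in> T \<Longrightarrow> (SOME v. v \<in> Vt t) \<in> Vt t"
  using Vt_nonempty some_in_eq by blast

lemma Vt_subset_branch_component:
  assumes t: "t \<in> T"
  shows "Vt t \<subseteq> branch_component t"
proof
  fix x assume "x \<in> Vt t"
  then have "reach (Vt t) (SOME v. v \<in> Vt t) x"
    using connected_in_reach[OF Vt_connected[OF t] some_in_Vt[OF t]] by blast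
  then show "x \<in> branch_component t"
    using reach_mono Vt_avoids_below[OF t] unfolding branch_component_def reach_class_def by blast
qed

lemma branch_component_subset: "t \<in> T \<Longrightarrow> branch_component t \<subseteq> V - GS Vt (sdown le t)"
  unfolding branch_component_def using reach_class_subset some_in_Vt Vt_avoids_below by blast

lemma branch_component_connected: "connected_in E (branch_component t)"
  unfolding branch_component_def by (rule connected_in_reach_class)

lemma branch_components_disjoint:
  assumes s: "s \<in> T" and t: "t \<in> T" and sdown: "sdown le s = sdown le t" and "s \<noteq> t"
  shows "branch_component s \<inter> branch_component t = {}"
proof (rule ccontr)
  let ?Z = "V - GS Vt (sdown le t)"
  let ?v = "\<lambda>t. SOME v. v \<in> Vt t"
  have le: "(a, b) \<in> le" if a: "a \<in> T" "sdown le a = sdown le t" and b: "b \<in> T"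
    and r: "reach ?Z (?v a) (?v b)" for a b
  proof -
    have Z: "?Z \<inter> GS Vt (sdown le a) = {}" using a(2) by (simp add: Diff_Int_distrib2)
    have v: "?v a \<in> ?Z" using Vt_avoids_below[OF a(1)] some_in_Vt[OF a(1)] a(2) by auto
    then obtain c where c: "(a, c) \<in> le" "linked ?Z c (?v b)"
      using reach_linked_above[OF a(1) Z some_in_Vt[OF a(1)] v r] by blast
    have "c = b" using linked_in_branch[OF c(2) _ b some_in_Vt[OF b]] c(1) le_in_T by blast
    then show ?thesis using c(1) by blast
  qed
  assume "branch_component s \<inter> branch_component t \<noteq> {}"
  then obtain x where "reach ?Z (?v s) x" "reach ?Z (?v t) x"
    unfolding branch_component_def reach_class_def sdown by blast
  then have "reach ?Z (?v s) (?v t)" using reach_sym rtrancl_trans by metis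
  then have "(s, t) \<in> le" "(t, s) \<in> le" using le[OF s sdown t] le[OF t refl s] reach_sym by blast+
  then show False using le_antisym \<open>s \<noteq> t\<close> by blast
qed
end

locale slim_ccn_tree = normal_tree V E T le Vt
  for V :: "'v set" and E and T :: "'t set" and le and Vt +
  fixes U :: "'v set"
  assumes U_uncountable: "uncountable U"
    and minor_ccn: "\<forall>B EH. rooted_minor V E U B EH \<and> (\<forall>X\<in>B. countable X)
           \<longrightarrow> countable_colouring_number B EH"
    and slim: "slim T le Vt" and rooted: "U_rooted_tree T Vt U" and U_GS: "U \<subseteq> GS Vt T"
begin

lemma branch_family_back_orientation:
  fixes \<beta> :: "'i \<Rightarrow> 'v set"
  assumes branch: "\<And>i. i \<in> J \<Longrightarrow> \<beta> i \<subseteq> V \<and> connected_in E (\<beta> i) \<and> \<beta> i \<inter> U \<noteq> {} \<and> countable (\<beta> i)"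
    and disjoint: "\<And>i j. i \<in> J \<Longrightarrow> j \<in> J \<Longrightarrow> i \<noteq> j \<Longrightarrow> \<beta> i \<inter> \<beta> j = {}"
    and edges: "\<And>i j. (i, j) \<in> A \<Longrightarrow> i \<in> J \<and> j \<in> J \<and> i \<noteq> j \<and> (j, i) \<in> A \<and> (\<exists>x\<in>\<beta> i. \<exists>y\<in>\<beta> j. (x, y) \<in> E)"
  shows "\<exists>F. finite_back_orientation J A F"
proof -
  have inj: "inj_on \<beta> J"
  proof (rule inj_onI)
    fix i j assume "i \<in> J" "j \<in> J" "\<beta> i = \<beta> j"
    then show "i = j" using disjoint branch by blast
  qed
  let ?EH = "map_prod \<beta> \<beta> ` A"
  have "graph (\<beta> ` J) ?EH" unfolding graph_def sym_def irrefl_def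
  proof (intro conjI allI impI notI)
    show "?EH \<subseteq> \<beta> ` J \<times> \<beta> ` J" using edges by fastforce
    fix P Q assume "(P, Q) \<in> ?EH"
    then obtain i j where "(i, j) \<in> A" "P = \<beta> i" "Q = \<beta> j" by auto
    then show "(Q, P) \<in> ?EH" using edges by (metis map_prod_imageI)
  next
    fix P assume "(P, P) \<in> ?EH"
    then obtain i j where "(i, j) \<in> A" "\<beta> i = \<beta> j" by auto
    then show False using edges inj inj_onD by metis
  qed
  moreover have "rooted_minor V E U (\<beta> ` J) ?EH"
    unfolding rooted_minor_def is_minor_def
  proof (intro conjI)
    show "\<forall>(X, Y)\<in>?EH. \<exists>x\<in>X. \<exists>y\<in>Y. (x, y) \<in> E" using edges by fastforce
  qed (use branch disjoint \<open>graph (\<beta> ` J) ?EH\<close> in \<open>blast+\<close>)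
  then have "countable_colouring_number (\<beta> ` J) ?EH" using minor_ccn branch by blast
  ultimately obtain F where "finite_back_orientation (\<beta> ` J) ?EH F"
    using countable_colouring_number_back_orientation by blast
  then show ?thesis using finite_back_orientation_inj_image[OF _ inj] by blast
qed

lemma bipartite_branch_back_orientation:
  fixes Y :: "'k \<Rightarrow> 'v set" and g :: "'v \<Rightarrow> 'k"
  assumes Y: "\<And>t. t \<in> K \<Longrightarrow> Y t \<subseteq> V - W \<and> countable (Y t) \<and> connected_in E (Y t) \<and> Y t \<inter> U \<noteq> {}"
    and disj: "\<And>t t'. t \<in> K \<Longrightarrow> t' \<in> K \<Longrightarrow> t \<noteq> t' \<Longrightarrow> Y t \<inter> Y t' = {}"
    and W: "W1 \<subseteq> W" "W \<subseteq> V" and K2: "K2 \<subseteq> K"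
    and g: "inj_on g W1" "g ` W1 \<subseteq> K - K2" "\<And>w. w \<in> W1 \<Longrightarrow> w \<in> neighbours_in E W (Y (g w))"
  shows "\<exists>F. finite_back_orientation (Inl ` W1 \<union> Inr ` K2)
     {(i, j). \<exists>w\<in>W1. \<exists>t\<in>K2. w \<in> neighbours_in E W (Y t) \<and> (i, j) \<in> {(Inl w, Inr t), (Inr t, Inl w)}} F"
proof (rule branch_family_back_orientation)
  let ?\<beta> = "case_sum (\<lambda>w. insert w (Y (g w))) Y"
  have gK: "g w \<in> K" "g w \<notin> K2" if "w \<in> W1" for w using that g(2) by blast+
  have W1_Y: "w \<notin> Y t" if "w \<in> W1" "t \<in> K" for w t using that Y W(1) by blast
  show "?\<beta> i \<subseteq> V \<and> connected_in E (?\<beta> i) \<and> ?\<beta> i \<inter> U \<noteq> {} \<and> countable (?\<beta> i)"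
    if "i \<in> Inl ` W1 \<union> Inr ` K2" for i
    using that
  proof
    assume "i \<in> Inl ` W1"
    then obtain w where w: "w \<in> W1" "i = Inl w" by blast
    then obtain y where "y \<in> Y (g w)" "(w, y) \<in> E"
      using g(3) edge_sym unfolding neighbours_in_def by blast
    then have "connected_in E (insert w (Y (g w)))"
      using connected_in_insert_edge Y[OF gK(1)[OF w(1)]] by blast
    then show ?thesis using w Y[OF gK(1)[OF w(1)]] W by auto
  next
    assume "i \<in> Inr ` K2"
    then obtain t where "t \<in> K" "i = Inr t" using K2 by blast
    then show ?thesis using Y[of t] by auto
  qed
  show "?\<beta> i \<inter> ?\<beta> j = {}" if "i \<in> Inl ` W1 \<union> Inr ` K2" "j \<in> Inl ` W1 \<union> Inr ` K2" "i \<noteq> j" for i j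
  proof -
    have YY: "Y (g w) \<inter> Y t = {}" if "w \<in> W1" "t \<in> K" "g w \<noteq> t" for w t
      using disj gK that by blast
    consider (ll) v w where "v \<in> W1" "w \<in> W1" "v \<noteq> w" "i = Inl v" "j = Inl w"
      | (lr) w t where "w \<in> W1" "t \<in> K2" "{i, j} = {Inl w, Inr t}"
      | (rr) s t where "s \<in> K2" "t \<in> K2" "s \<noteq> t" "i = Inr s" "j = Inr t"
      using \<open>i \<in> _\<close> \<open>j \<in> _\<close> \<open>i \<noteq> j\<close> by blast
    then show ?thesis
    proof cases
      case ll
      then have "g v \<noteq> g w" using g(1) inj_onD by metis
      then show ?thesis using ll YY[of v "g w"] W1_Y gK by auto
    next
      case lr
      then have "Y (g w) \<inter> Y t = {}" using YY K2 gK by blast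
      moreover have "w \<notin> Y t" using W1_Y lr K2 by blast
      ultimately have "insert w (Y (g w)) \<inter> Y t = {}" by blast
      then show ?thesis using lr(3) by (auto simp: doubleton_eq_iff)
    next
      case rr
      then show ?thesis using disj K2 by auto
    qed
  qed
  show "i \<in> Inl ` W1 \<union> Inr ` K2 \<and> j \<in> Inl ` W1 \<union> Inr ` K2 \<and> i \<noteq> j \<and>
      (j, i) \<in> {(i, j). \<exists>w\<in>W1. \<exists>t\<in>K2. w \<in> neighbours_in E W (Y t) \<and> (i, j) \<in> {(Inl w, Inr t), (Inr t, Inl w)}} \<and>
      (\<exists>x\<in>?\<beta> i. \<exists>y\<in>?\<beta> j. (x, y) \<in> E)"
    if "(i, j) \<in> {(i, j). \<exists>w\<in>W1. \<exists>t\<in>K2. w \<in> neighbours_in E W (Y t) \<and> (i, j) \<in> {(Inl w, Inr t), (Inr t, Inl w)}}"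
    for i j
    using that edge_sym unfolding neighbours_in_def by fastforce
qed

end

context slim_ccn_tree
begin

text \<open>Otherwise, shrinking the sets to countable cores, an uncountable subfamily and
  countably many vertices of W, each joined to its own member of the family, form a
  rooted minor in which uncountably many branch sets have infinitely many neighbours
  among countably many others; so it has no countable colouring number.\<close>
lemma disjoint_family_countable:
  fixes K :: "'k set" and D :: "'k \<Rightarrow> 'v set"
  assumes W: "W \<subseteq> V" "countable W"
    and D: "\<And>t. t \<in> K \<Longrightarrow>
       D t \<subseteq> V - W \<and> connected_in E (D t) \<and> D t \<inter> U \<noteq> {} \<and> infinite (neighbours_in E W (D t))"
    and disj: "\<And>t t'. t \<in> K \<Longrightarrow> t' \<in> K \<Longrightarrow> t \<noteq> t' \<Longrightarrow> D t \<inter> D t' = {}"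
  shows "countable K"
proof (rule ccontr)
  assume K: "uncountable K"
  have "\<exists>Y \<subseteq> D t. countable Y \<and> connected_in E Y \<and> Y \<inter> U \<noteq> {} \<and> infinite (neighbours_in E W Y)"
    if t: "t \<in> K" for t
  proof -
    obtain u where u: "u \<in> D t" "u \<in> U" using D[OF t] by blast
    then show ?thesis using countable_connected_core[of "D t" u W] D[OF t] W(2) by blast
  qed
  then obtain Y where Y: "\<And>t. t \<in> K \<Longrightarrow> Y t \<subseteq> D t \<and> countable (Y t) \<and> connected_in E (Y t) \<and>
      Y t \<inter> U \<noteq> {} \<and> infinite (neighbours_in E W (Y t))"
    by metis
  let ?N = "\<lambda>t. neighbours_in E W (Y t)"
  have N_W: "\<And>t. t \<in> K \<Longrightarrow> ?N t \<subseteq> W" unfolding neighbours_in_def by blast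
  obtain W1 g K2 where W1: "W1 \<subseteq> W" and K2: "K2 \<subseteq> K" "uncountable K2"
    and g: "inj_on g W1" "g ` W1 \<subseteq> K - K2" "\<forall>w\<in>W1. w \<in> ?N (g w)" and N: "\<forall>t\<in>K2. ?N t \<subseteq> W1"
    by (rule uncountable_family_reduction[of W K ?N, OF W(2) K N_W])
  let ?A = "{(i, j). \<exists>w\<in>W1. \<exists>t\<in>K2. w \<in> ?N t \<and> (i, j) \<in> {(Inl w, Inr t), (Inr t, Inl w)}}
    :: (('v + 'k) \<times> ('v + 'k)) set"
  have "Y t \<subseteq> V - W \<and> countable (Y t) \<and> connected_in E (Y t) \<and> Y t \<inter> U \<noteq> {}" if t: "t \<in> K" for t
  proof -
    have "Y t \<subseteq> D t" "D t \<subseteq> V - W" using Y[OF t] D[OF t] by blast+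
    then show ?thesis using Y[OF t] by blast
  qed
  moreover have "Y t \<inter> Y t' = {}" if "t \<in> K" "t' \<in> K" "t \<noteq> t'" for t t'
    using Y disj[OF that] that by blast
  ultimately obtain F where F: "finite_back_orientation (Inl ` W1 \<union> Inr ` K2) ?A F"
    using bipartite_branch_back_orientation[OF _ _ W1 W(1) K2(1) g(1,2)] g(3) by blast
  define H where "H = {j\<in>Inl ` W1 \<union> Inr ` K2. infinite {i\<in>Inl ` W1. (i, j) \<in> ?A}}"
  have "countable (Inl ` W1)" using W(2) W1 countable_subset by blast
  then have "countable H" unfolding H_def using finite_back_orientation_few_heavy[OF F] by blast
  moreover have "Inr ` K2 \<subseteq> H"
  proof
    fix j :: "'v + 'k" assume "j \<in> Inr ` K2"
    then obtain t where t: "t \<in> K2" "j = Inr t" by blast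
    have "infinite (?N t)" using Y t K2(1) by blast
    then have "infinite (Inl ` ?N t)" by (simp add: finite_image_iff)
    moreover have "Inl ` ?N t \<subseteq> {i\<in>Inl ` W1. (i, j) \<in> ?A}"
    proof
      fix i :: "'v + 'k" assume "i \<in> Inl ` ?N t"
      then obtain w where w: "w \<in> ?N t" "i = Inl w" by blast
      then have "w \<in> W1" using N t(1) by blast
      then show "i \<in> {i\<in>Inl ` W1. (i, j) \<in> ?A}" using w t by blast
    qed
    ultimately have "infinite {i\<in>Inl ` W1. (i, j) \<in> ?A}" using infinite_super by blast
    then show "j \<in> H" unfolding H_def using \<open>j \<in> Inr ` K2\<close> by blast
  qed
  ultimately have "countable (Inr ` K2 :: ('v + 'k) set)" by (rule countable_subset[rotated])
  then have "countable K2" by (rule countable_image_inj_on) simp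
  then show False using K2(2) by blast
qed

lemma countable_Vt: "t \<in> T \<Longrightarrow> countable (sdown le t) \<Longrightarrow> countable (Vt t)"
proof -
  assume "t \<in> T" "countable (sdown le t)"
  then have "|Vt t| \<le>o |sdown le t| +c natLeq" "|sdown le t| \<le>o natLeq"
    using slim countable_card_le_natLeq unfolding slim_def by blast+
  moreover have "|sdown le t| +c natLeq =o natLeq"
    using csum_absorb2'[OF natLeq_Card_order] natLeq_cinfinite calculation(2) by blast
  ultimately show ?thesis using countable_card_le_natLeq ordLeq_ordIso_trans by blast
qed

lemma tree_back_orientation:
  assumes W: "W \<subseteq> T" and countable: "\<And>w. w \<in> W \<Longrightarrow> countable (Vt w)"
  shows "\<exists>F. finite_back_orientation W (contraction E T Vt) F"
proof -
  let ?A = "contraction E T Vt \<inter> W \<times> W"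
  have "\<exists>F. finite_back_orientation W ?A F"
  proof (rule branch_family_back_orientation)
    fix w assume w: "w \<in> W"
    then have "Vt w \<inter> U \<noteq> {}" using rooted W unfolding U_rooted_tree_def by blast
    then show "Vt w \<subseteq> V \<and> connected_in E (Vt w) \<and> Vt w \<inter> U \<noteq> {} \<and> countable (Vt w)"
      using w W Vt_subset Vt_connected countable by blast
  next
    fix v w assume "v \<in> W" "w \<in> W" "v \<noteq> w"
    then show "Vt v \<inter> Vt w = {}" using W Vt_disjoint by blast
  next
    fix v w assume vw: "(v, w) \<in> ?A"
    then have "(v, w) \<in> contraction E T Vt" by blast
    then have "v \<in> T" "w \<in> T" "v \<noteq> w" "\<exists>x\<in>Vt v. \<exists>y\<in>Vt w. (x, y) \<in> E"
      unfolding contraction_iff by blast+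
    moreover have "\<exists>x\<in>Vt w. \<exists>y\<in>Vt v. (x, y) \<in> E" using calculation(4) edge_sym by blast
    ultimately have "(w, v) \<in> contraction E T Vt" unfolding contraction_iff by blast
    then show "v \<in> W \<and> w \<in> W \<and> v \<noteq> w \<and> (w, v) \<in> ?A \<and> (\<exists>x\<in>Vt v. \<exists>y\<in>Vt w. (x, y) \<in> E)"
      using vw \<open>v \<noteq> w\<close> \<open>\<exists>x\<in>Vt v. \<exists>y\<in>Vt w. (x, y) \<in> E\<close> by blast
  qed
  then show ?thesis unfolding finite_back_orientation_def by blast
qed
end

context slim_ccn_tree
begin

text \<open>A minimal node of uncountable height would sit above a limit node a that is closed
  under a finite back-orientation of the contraction minor on the nodes of countable height;
  but a has infinitely many lower neighbours, one of which must charge the edge to a.\<close>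
lemma countable_heights: "t \<in> T \<Longrightarrow> countable (sdown le t)"
proof (rule ccontr)
  assume "t \<in> T" "uncountable (sdown le t)"
  let ?C = "{s\<in>T. uncountable (sdown le s)}"
  obtain t' where t': "t' \<in> ?C" "\<forall>a\<in>?C. (a, t') \<in> le \<longrightarrow> a = t'"
    using minimal_exists[of ?C] \<open>t \<in> T\<close> \<open>uncountable (sdown le t)\<close> by blast
  have cnt: "countable (sdown le d)" if "d \<in> sdown le t'" for d
    using that t'(2) le_in_T unfolding sdown_def by blast
  let ?W = "{s\<in>T. countable (sdown le s)}"
  obtain F where F: "finite_back_orientation ?W (contraction E T Vt) F"
    using tree_back_orientation[of ?W] countable_Vt by blast
  have W: "sdown le t' \<subseteq> ?W" using cnt le_in_T unfolding sdown_def by blast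
  have "countable (F d)" if d: "d \<in> sdown le t'" for d
  proof -
    have "d \<in> ?W" using d W by blast
    then have "finite (F d)" using F unfolding finite_back_orientation_def by blast
    then show ?thesis by (rule countable_finite)
  qed
  then obtain a where a: "a \<in> sdown le t'" "limit_node a"
    and closed: "\<forall>u\<in>sdown le a. \<forall>x\<in>F u \<inter> sdown le t'. (x, a) \<in> le \<and> x \<noteq> a"
    using uncountable_height_closure_point[of t' F] t'(1) cnt by blast
  have aT: "a \<in> T" using a(1) le_in_T unfolding sdown_def by blast
  have below: "sdown le a \<subseteq> sdown le t'"
    using a(1) le_trans le_antisym unfolding sdown_def by blast
  have inf: "infinite {u\<in>sdown le a. (u, a) \<in> contraction E T Vt}"
    by (rule limit_node_infinite_lower_neighbours[OF aT a(2)])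
  have sub: "{u\<in>sdown le a. (u, a) \<in> contraction E T Vt} \<subseteq> {u\<in>?W. (u, a) \<in> contraction E T Vt}"
    using below W by blast
  have "a \<in> ?W" using a(1) W by blast
  from finite_back_orientation_catch[OF F this sub inf]
  obtain u where "u \<in> sdown le a" "a \<in> F u" by blast
  then show False using closed a(1) by blast
qed

lemma uncountable_T: "uncountable T"
proof
  assume "countable T"
  then have "countable (GS Vt T)" unfolding GS_def using countable_Vt countable_heights by blast
  then show False using U_GS U_uncountable countable_subset by blast
qed

definition tree_orientation :: "'t \<Rightarrow> 't set" where
  "tree_orientation = (SOME F. finite_back_orientation T (contraction E T Vt) F)"

lemma finite_back_orientation_tree_orientation:
  "finite_back_orientation T (contraction E T Vt) tree_orientation"
proof -
  have "countable (Vt t)" if "t \<in> T" for t using that countable_Vt countable_heights by blast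
  then have "\<exists>F. finite_back_orientation T (contraction E T Vt) F"
    by (rule tree_back_orientation[OF subset_refl])
  then show ?thesis unfolding tree_orientation_def by (rule someI_ex)
qed

definition heavy_children :: "'t \<Rightarrow> 't set" where
  "heavy_children p = {t\<in>T. sdown le t = down le p \<and>
     infinite (neighbours_in E (GS Vt (down le p)) (branch_component t))}"

lemma countable_heavy_children:
  assumes p: "p \<in> T"
  shows "countable (heavy_children p)"
proof (rule disjoint_family_countable)
  show "GS Vt (down le p) \<subseteq> V" using Vt_subset le_in_T unfolding GS_def down_def by blast
  have "countable (down le p)" using countable_heights p down_eq_insert_sdown by simp
  then show "countable (GS Vt (down le p))"
    unfolding GS_def using countable_Vt countable_heights le_in_T unfolding down_def by blast
next
  fix t assume "t \<in> heavy_children p"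
  then have t: "t \<in> T" "sdown le t = down le p"
    and inf: "infinite (neighbours_in E (GS Vt (down le p)) (branch_component t))"
    unfolding heavy_children_def by blast+
  have "Vt t \<inter> U \<noteq> {}" using rooted t(1) unfolding U_rooted_tree_def by blast
  then have "branch_component t \<inter> U \<noteq> {}" using Vt_subset_branch_component[OF t(1)] by blast
  then show "branch_component t \<subseteq> V - GS Vt (down le p) \<and> connected_in E (branch_component t) \<and>
      branch_component t \<inter> U \<noteq> {} \<and> infinite (neighbours_in E (GS Vt (down le p)) (branch_component t))"
    using branch_component_subset[OF t(1)] t(2) branch_component_connected inf by simp
next
  fix t t' assume "t \<in> heavy_children p" "t' \<in> heavy_children p" "t \<noteq> t'"
  then show "branch_component t \<inter> branch_component t' = {}"
    using branch_components_disjoint unfolding heavy_children_def by auto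
qed

definition closure_rel :: "('t \<times> 't) set" where
  "closure_rel = {(s, s'). s \<in> T \<and> s' \<in> T \<and>
     ((s', s) \<in> le \<or> s' \<in> tree_orientation s \<or> s' \<in> heavy_children s)}"

lemma closure_rel_subset: "closure_rel \<subseteq> T \<times> T"
  unfolding closure_rel_def by blast

lemma countable_closure_rel_Image: "countable (closure_rel `` {s})"
proof (cases "s \<in> T")
  case True
  have "closure_rel `` {s} \<subseteq> down le s \<union> tree_orientation s \<union> heavy_children s"
    unfolding closure_rel_def down_def by blast
  moreover have "countable (down le s)" using countable_heights True down_eq_insert_sdown by simp
  moreover have "finite (tree_orientation s)"
    using finite_back_orientation_tree_orientation True unfolding finite_back_orientation_def by blast
  ultimately show ?thesis
    using countable_heavy_children[OF True] countable_finite countable_subset by (metis countable_Un)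
next
  case False
  then show ?thesis unfolding closure_rel_def by simp
qed

lemma closure_closed_rooted_subtree:
  "S \<subseteq> T \<Longrightarrow> closure_rel `` S \<subseteq> S \<Longrightarrow> rooted_subtree T le S"
  unfolding rooted_subtree_def closure_rel_def using le_in_T by blast

end

context normal_tree
begin

lemma Vt_avoids_GS: "t \<in> T \<Longrightarrow> t \<notin> S \<Longrightarrow> S \<subseteq> T \<Longrightarrow> Vt t \<inter> GS Vt S = {}"
  using Vt_disjoint unfolding GS_def by blast

lemma component_minimal_node:
  assumes S: "rooted_subtree T le S" and C: "component_of E (V - GS Vt S) C" "C \<inter> GS Vt T \<noteq> {}"
  obtains t where "t \<in> T" "t \<notin> S" "Vt t \<subseteq> C" "sdown le t \<subseteq> S"
proof -
  have ST: "S \<subseteq> T" using S unfolding rooted_subtree_def by blast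
  have CV: "C \<subseteq> V - GS Vt S" using C(1) unfolding component_of_def by blast
  let ?N = "{s\<in>T. Vt s \<inter> C \<noteq> {}}"
  have "?N \<noteq> {}" using C(2) unfolding GS_def by blast
  then obtain t where t: "t \<in> ?N" "\<forall>a\<in>?N. (a, t) \<in> le \<longrightarrow> a = t"
    using minimal_exists[of ?N] by blast
  have not_S: "a \<notin> S" if "a \<in> ?N" for a
    using that CV unfolding GS_def by blast
  have in_C: "X \<subseteq> C" if "connected_in E X" "X \<subseteq> V - GS Vt S" "X \<inter> C \<noteq> {}" for X
    using component_of_absorbs[OF C(1)] that by blast
  have Vt_C: "Vt a \<subseteq> C" if a: "a \<in> ?N" for a
  proof (rule in_C)
    show "Vt a \<subseteq> V - GS Vt S" using Vt_subset Vt_avoids_GS[OF _ not_S[OF a] ST] a by blast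
  qed (use a Vt_connected in blast)+
  have "s \<in> S" if s: "s \<in> sdown le t" for s
  proof (rule ccontr)
    assume "s \<notin> S"
    have tT: "t \<in> T" using t(1) by blast
    obtain u where u: "u \<in> sdown le t" "(u, t) \<in> contraction E T Vt" "(s, u) \<in> le"
      using contraction_cofinal[OF tT s] by blast
    have uT: "u \<in> T" and "u \<notin> S"
      using u(2) \<open>s \<notin> S\<close> u(3) S unfolding contraction_iff rooted_subtree_def by blast+
    obtain x y where xy: "x \<in> Vt u" "y \<in> Vt t" "(x, y) \<in> E" using u(2) unfolding contraction_iff by blast
    have "connected_in E (Vt u \<union> Vt t)"
      using connected_in_Un_edge[OF Vt_connected[OF uT] Vt_connected[OF tT] xy] .
    moreover have "Vt u \<union> Vt t \<subseteq> V - GS Vt S"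
      using Vt_subset Vt_avoids_GS[OF uT \<open>u \<notin> S\<close> ST] Vt_avoids_GS[OF tT not_S[OF t(1)] ST] uT tT
      by blast
    moreover have "(Vt u \<union> Vt t) \<inter> C \<noteq> {}" using t(1) by blast
    ultimately have "Vt u \<subseteq> C" using in_C by blast
    then have "u \<in> ?N" using Vt_nonempty[OF uT] uT by blast
    then show False using t(2) u(1) unfolding sdown_def by blast
  qed
  then show ?thesis using that t(1) not_S Vt_C by blast
qed

lemma component_neighbours_below:
  assumes S: "rooted_subtree T le S" and C: "C \<subseteq> V - GS Vt S" "connected_in E C"
    and t: "t \<in> T" "t \<notin> S" "Vt t \<subseteq> C" "sdown le t \<subseteq> S"
  shows "neighbours_in E (GS Vt S) C \<subseteq> neighbours_in E (GS Vt (sdown le t)) (branch_component t)"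
proof
  fix h assume "h \<in> neighbours_in E (GS Vt S) C"
  then obtain c s where h: "s \<in> S" "h \<in> Vt s" "c \<in> C" "(c, h) \<in> E"
    unfolding neighbours_in_def GS_def by blast
  have sT: "s \<in> T" using h(1) S unfolding rooted_subtree_def by blast
  let ?v = "SOME v. v \<in> Vt t"
  have v: "?v \<in> Vt t" "?v \<in> C" using some_in_Vt[OF t(1)] t(3) by blast+
  have "C \<inter> GS Vt (sdown le t) = {}" using C(1) t(4) unfolding GS_def by blast
  then obtain a where a: "(t, a) \<in> le" "linked C a c"
    using reach_linked_above[OF t(1) _ v connected_in_reach[OF C(2) v(2) h(3)]] by blast
  have "(a, s) \<in> le \<or> (s, a) \<in> le"
    using linked_edge_comparable[OF a(2) h(4) h(2) _ sT] a(1) le_in_T by blast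
  then have "(s, a) \<in> le" using a(1) le_trans t(2) h(1) S unfolding rooted_subtree_def by blast
  then have "(s, t) \<in> le"
    using below_comparable[OF _ a(1)] t(2) h(1) S unfolding rooted_subtree_def by blast
  then have "h \<in> GS Vt (sdown le t)" using h(1,2) t(2) unfolding GS_def sdown_def by blast
  moreover have "C \<subseteq> V - GS Vt (sdown le t)" using C(1) t(4) unfolding GS_def by blast
  then have "reach (V - GS Vt (sdown le t)) ?v c"
    by (rule reach_mono[OF connected_in_reach[OF C(2) v(2) h(3)]])
  then have "c \<in> branch_component t" unfolding branch_component_def reach_class_def by blast
  ultimately show "h \<in> neighbours_in E (GS Vt (sdown le t)) (branch_component t)"
    using h(4) unfolding neighbours_in_def by blast
qed

end

context slim_ccn_tree
begin

lemma closure_closed_finite_adhesion: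
  assumes S: "S \<subseteq> T" "closure_rel `` S \<subseteq> S" "S \<noteq> {}"
  shows "finite_adhesion V E (GS Vt S) U"
  unfolding finite_adhesion_iff
proof (intro allI impI, elim conjE)
  fix C assume C: "component_of E (V - GS Vt S) C" "C \<inter> U \<noteq> {}"
  have rooted: "rooted_subtree T le S" using closure_closed_rooted_subtree S by blast
  have CV: "C \<subseteq> V - GS Vt S" "connected_in E C" using C(1) unfolding component_of_def by blast+
  obtain t where t: "t \<in> T" "t \<notin> S" "Vt t \<subseteq> C" "sdown le t \<subseteq> S"
    using component_minimal_node[OF rooted C(1)] C(2) U_GS by blast
  have into_S: "s' \<in> S" if "s \<in> S" "(s, s') \<in> closure_rel" for s s'
    using that S(2) by blast
  from t(1) show "finite (neighbours_in E (GS Vt S) C)"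
  proof (cases rule: node_cases)
    case 1
    obtain r where r: "r \<in> T" "\<forall>x\<in>T. (r, x) \<in> le" using root_exists by blast
    have "r \<in> S" using S(1,3) r rooted unfolding rooted_subtree_def by blast
    then show ?thesis using 1 r t(1,2) unfolding sdown_def by blast
  next
    case (2 p)
    have "p \<in> S" using 2(1) t(4) by blast
    then have "t \<notin> heavy_children p" using into_S t(1,2) S(1) unfolding closure_rel_def by blast
    then have "finite (neighbours_in E (GS Vt (sdown le t)) (branch_component t))"
      using t(1) 2(2) unfolding heavy_children_def by simp
    then show ?thesis using component_neighbours_below[OF rooted CV t] finite_subset by blast
  next
    case 3
    have "infinite {u\<in>sdown le t. (u, t) \<in> contraction E T Vt}"
      by (rule limit_node_infinite_lower_neighbours[OF t(1) 3])
    moreover have "{u\<in>sdown le t. (u, t) \<in> contraction E T Vt} \<subseteq> {u\<in>T. (u, t) \<in> contraction E T Vt}"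
      unfolding sdown_def using le_in_T by blast
    ultimately obtain u where "u \<in> sdown le t" "t \<in> tree_orientation u"
      using finite_back_orientation_catch[OF finite_back_orientation_tree_orientation t(1)] by blast
    then have "t \<in> S" using into_S t(1,4) S(1) unfolding closure_rel_def by blast
    then show ?thesis using t(2) by blast
  qed
qed

end

theorem lemma5p1:
  fixes V :: "'v set" and E :: "('v \<times> 'v) set" and U :: "'v set"
    and T :: "'t set" and le :: "('t \<times> 't) set" and Vt :: "'t \<Rightarrow> 'v set"
  assumes "connected_graph V E"
    and "U \<subseteq> V" and "uncountable U"
    and "\<forall>B EH. rooted_minor V E U B EH \<and> (\<forall>X\<in>B. countable X)
           \<longrightarrow> countable_colouring_number B EH"
    and "normal_semi_partition_tree V E T le Vt"
    and "slim T le Vt" and "U_rooted_tree T Vt U"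
    and "U \<subseteq> GS Vt T"
  shows "\<exists>(I :: 't set) rI Ts. cf_index T rI I \<and>
     (\<forall>i\<in>I. rooted_subtree T le (Ts i) \<and> infinite (Ts i) \<and>
        (card_of (Ts i), card_of T) \<in> ordLess \<and>
        finite_adhesion V E (GS Vt (Ts i)) U) \<and>
     (\<forall>i\<in>I. \<forall>j\<in>I. (j, i) \<in> rI \<longrightarrow> Ts j \<subseteq> Ts i) \<and>
     (\<Union>i\<in>I. Ts i) = T \<and>
     (\<forall>i\<in>I. is_limit rI i \<longrightarrow> Ts i = (\<Union>j\<in>{j\<in>I. (j, i) \<in> rI \<and> j \<noteq> i}. Ts j))"
proof -
  interpret slim_ccn_tree V E T le Vt U
    using assms unfolding connected_graph_def by unfold_locales blast+
  obtain I :: "'t set" and rI Ts where "cf_index T rI I"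
    and chain: "\<forall>i\<in>I. Ts i \<subseteq> T \<and> closure_rel `` Ts i \<subseteq> Ts i \<and> infinite (Ts i) \<and> |Ts i| <o |T|"
    and "\<forall>i\<in>I. \<forall>j\<in>I. (j, i) \<in> rI \<longrightarrow> Ts j \<subseteq> Ts i" "(\<Union>i\<in>I. Ts i) = T"
    and "\<forall>i\<in>I. is_limit rI i \<longrightarrow> Ts i = (\<Union>j\<in>{j\<in>I. (j, i) \<in> rI \<and> j \<noteq> i}. Ts j)"
    using closed_continuous_chain[OF uncountable_T closure_rel_subset countable_closure_rel_Image]
    by blast
  moreover have "rooted_subtree T le (Ts i) \<and> finite_adhesion V E (GS Vt (Ts i)) U" if "i \<in> I" for i
  proof -
    have "Ts i \<subseteq> T" "closure_rel `` Ts i \<subseteq> Ts i" "Ts i \<noteq> {}" using chain that by auto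
    then show ?thesis using closure_closed_rooted_subtree closure_closed_finite_adhesion by blast
  qed
  ultimately show ?thesis using chain by blast
qed

end
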